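(* Assume $\dim\mathfrak z=1$. Let $\mathcal Z\subseteq N$ be the set of all points $\gamma(t)$ ($t\neq0$) that are conjugate to $\gamma(0)=1$ along some geodesic $\gamma$ with $\gamma(0)=1$ and $\dot\gamma(0)\in\mathfrak v\setminus\{0\}$. Then $\mathcal Z$ is a real-analytic embedded submanifold of the hypersurface $\exp(\mathfrak v)$ of $N$, where $\exp$ is the Lie group exponential map.
   Context: Let $N$ be a connected, simply connected, 2-step nilpotent real Lie group with Lie algebra $\mathfrak n$ and center $\mathfrak z$; its Lie group exponential map $\exp:\mathfrak n\to N$ is a diffeomorphism. Let $\langle\,,\rangle$ be an inner product on $\mathfrak n$, meaning a nondegenerate symmetric bilinear form (possibly indefinite); the same symbol denotes the induced left-invariant pseudo-Riemannian metric on $N$, with Levi-Civita connection $\nabla$. Assume the restriction of $\langle\,,\rangle$ to $\mathfrak z$ is nondegenerate and put $\mathfrak v=\mathfrak z^\perp$, so $\mathfrak n=\mathfrak z\oplus\mathfrak v$. A Jacobi field along a geodesic $\gamma$ is a vector field $Y$ along $\gamma$ with $\nabla_{\dot\gamma}\nabla_{\dot\gamma}Y+R(Y,\dot\gamma)\dot\gamma=0$, where $R(X,Y)=\nabla_X\nabla_Y-\nabla_Y\nabla_X-\nabla_{[X,Y]}$; $\gamma(t_0)$ ($t_0\ne0$) is conjugate to $\gamma(0)$ along $\gamma$ if some nontrivial Jacobi field vanishes at $0$ and $t_0$. *)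

theory Defs
  imports "HOL-Analysis.Analysis"
begin

text \<open>
The simply connected 2-step nilpotent group N with Lie algebra n = real^'n
(bracket br) is realised, via the Lie group exponential, on real^'n itself with the
Baker-Campbell-Hausdorff product x*y = x + y + (1/2)[x,y]; exp is the identity map and
the identity element is 0.  Tangent vectors at p are represented by their left
trivialisation, i.e. v in T_pN is written as dL_p X with X in n; here
dL_p X = X + (1/2)[p,X] and its inverse is v - (1/2)[p,v].
\<close>

definition bch_mult :: "(real^'n \<Rightarrow> real^'n \<Rightarrow> real^'n) \<Rightarrow> real^'n \<Rightarrow> real^'n \<Rightarrow> real^'n" where
  "bch_mult br x y = x + y + (1/2) *\<^sub>R br x y"

text \<open>Levi-Civita connection on left-invariant fields (Koszul formula), using the
nondegenerate inner product B.\<close>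
definition lc_nabla :: "(real^'n \<Rightarrow> real^'n \<Rightarrow> real^'n) \<Rightarrow> (real^'n \<Rightarrow> real^'n \<Rightarrow> real)
    \<Rightarrow> real^'n \<Rightarrow> real^'n \<Rightarrow> real^'n" where
  "lc_nabla br B X Y =
     (THE w. \<forall>Z. B w Z = (B (br X Y) Z - B (br Y Z) X + B (br Z X) Y) / 2)"

text \<open>Curvature R(X,Y)Z = nabla_X nabla_Y Z - nabla_Y nabla_X Z - nabla_[X,Y] Z on
left-invariant fields (R is a left-invariant tensor).\<close>
definition lc_curv :: "(real^'n \<Rightarrow> real^'n \<Rightarrow> real^'n) \<Rightarrow> (real^'n \<Rightarrow> real^'n \<Rightarrow> real)
    \<Rightarrow> real^'n \<Rightarrow> real^'n \<Rightarrow> real^'n \<Rightarrow> real^'n" where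
  "lc_curv br B X Y Z =
     lc_nabla br B X (lc_nabla br B Y Z) - lc_nabla br B Y (lc_nabla br B X Z)
     - lc_nabla br B (br X Y) Z"

definition lt_vel :: "(real^'n \<Rightarrow> real^'n \<Rightarrow> real^'n) \<Rightarrow> (real \<Rightarrow> real^'n)
    \<Rightarrow> (real \<Rightarrow> real^'n) \<Rightarrow> real \<Rightarrow> real^'n" where
  "lt_vel br \<gamma> \<gamma>' s = \<gamma>' s - (1/2) *\<^sub>R br (\<gamma> s) (\<gamma>' s)"

definition geodesic_on :: "(real^'n \<Rightarrow> real^'n \<Rightarrow> real^'n) \<Rightarrow> (real^'n \<Rightarrow> real^'n \<Rightarrow> real)
    \<Rightarrow> real set \<Rightarrow> (real \<Rightarrow> real^'n) \<Rightarrow> (real \<Rightarrow> real^'n) \<Rightarrow> bool" where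
  "geodesic_on br B I \<gamma> \<gamma>' \<longleftrightarrow> open I \<and> is_interval I \<and>
     (\<forall>t\<in>I. (\<gamma> has_vector_derivative \<gamma>' t) (at t)) \<and>
     (\<exists>u'. \<forall>t\<in>I. (lt_vel br \<gamma> \<gamma>' has_vector_derivative u' t) (at t) \<and>
             u' t + lc_nabla br B (lt_vel br \<gamma> \<gamma>' t) (lt_vel br \<gamma> \<gamma>' t) = 0)"

text \<open>Jacobi field along gamma, given in the left-invariant frame by y : I \<rightarrow> n:
D_t D_t Y + R(Y, gamma') gamma' = 0, where D_t w = w' + nabla_u w.\<close>
definition jacobi_field :: "(real^'n \<Rightarrow> real^'n \<Rightarrow> real^'n) \<Rightarrow> (real^'n \<Rightarrow> real^'n \<Rightarrow> real)
    \<Rightarrow> real set \<Rightarrow> (real \<Rightarrow> real^'n) \<Rightarrow> (real \<Rightarrow> real^'n) \<Rightarrow> (real \<Rightarrow> real^'n) \<Rightarrow> bool" where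
  "jacobi_field br B I \<gamma> \<gamma>' y \<longleftrightarrow>
     (\<exists>y1 w1. \<forall>t\<in>I.
        (y has_vector_derivative y1 t) (at t) \<and>
        ((\<lambda>s. y1 s + lc_nabla br B (lt_vel br \<gamma> \<gamma>' s) (y s)) has_vector_derivative w1 t) (at t) \<and>
        w1 t + lc_nabla br B (lt_vel br \<gamma> \<gamma>' t) (y1 t + lc_nabla br B (lt_vel br \<gamma> \<gamma>' t) (y t))
          + lc_curv br B (y t) (lt_vel br \<gamma> \<gamma>' t) (lt_vel br \<gamma> \<gamma>' t) = 0)"

definition conjugate_along :: "(real^'n \<Rightarrow> real^'n \<Rightarrow> real^'n) \<Rightarrow> (real^'n \<Rightarrow> real^'n \<Rightarrow> real)
    \<Rightarrow> real set \<Rightarrow> (real \<Rightarrow> real^'n) \<Rightarrow> (real \<Rightarrow> real^'n) \<Rightarrow> real \<Rightarrow> bool" where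
  "conjugate_along br B I \<gamma> \<gamma>' t0 \<longleftrightarrow> 0 \<in> I \<and> t0 \<in> I \<and> t0 \<noteq> 0 \<and>
     (\<exists>y. jacobi_field br B I \<gamma> \<gamma>' y \<and> y 0 = 0 \<and> y t0 = 0 \<and> (\<exists>t\<in>I. y t \<noteq> 0))"

definition real_analytic_on :: "(real^'n \<Rightarrow> real^'m) \<Rightarrow> (real^'n) set \<Rightarrow> bool" where
  "real_analytic_on f U \<longleftrightarrow> (\<forall>p\<in>U. \<exists>r>0. \<exists>c :: ('n \<Rightarrow> nat) \<Rightarrow> real^'m.
     \<forall>x\<in>ball p r. ((\<lambda>\<alpha>. (\<Prod>i\<in>UNIV. (x $ i - p $ i) ^ \<alpha> i) *\<^sub>R c \<alpha>) has_sum f x) UNIV)"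

definition analytic_submanifold :: "(real^'n) set \<Rightarrow> bool" where
  "analytic_submanifold S \<longleftrightarrow> (\<forall>p\<in>S. \<exists>U V (\<phi> :: real^'n \<Rightarrow> real^'n) \<psi> (K :: 'n set).
     open U \<and> p \<in> U \<and> open V \<and> \<phi> ` U = V \<and> \<psi> ` V = U \<and>
     (\<forall>x\<in>U. \<psi> (\<phi> x) = x) \<and> (\<forall>y\<in>V. \<phi> (\<psi> y) = y) \<and>
     real_analytic_on \<phi> U \<and> real_analytic_on \<psi> V \<and>
     \<phi> ` (U \<inter> S) = V \<inter> {y. \<forall>i. i \<notin> K \<longrightarrow> y $ i = 0})"

end

(*
  Write the center as the line spanned by Z, so that [x, y] = omega x y Z, and let J be
  the skew map with B (J x) w = B Z [x, w]. On directions orthogonal to the center the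
  Levi-Civita connection and the curvature are then explicit in terms of omega and J.
  A geodesic from the identity with horizontal initial velocity X is the line t X, and
  along it the Jacobi equation becomes a linear ODE whose solutions with y 0 = 0 are
  cubic polynomials; a nontrivial one vanishes again at t0 exactly when
  t0^2 omega X (J X) = -12. Hence the conjugate locus is the quadric
  {x horizontal. omega x (J x) = -12}. A quadric {l x = 0, q x = c} with c nonzero has no
  singular point, and near each of its points a stereographic projection gives a rational
  chart straightening it; the chart is real-analytic because convergent power series are
  closed under sums, products and reciprocals.
*)

theory Submission
  imports Defs "HOL-Library.Function_Algebras"
begin

section \<open>Convergent power series in several real variables\<close>

definition monom :: "real^'n \<Rightarrow> real^'n \<Rightarrow> ('n \<Rightarrow> nat) \<Rightarrow> real" where
  "monom p x \<alpha> = (\<Prod>i\<in>UNIV. (x $ i - p $ i) ^ \<alpha> i)"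

definition mdegree :: "('n::finite \<Rightarrow> nat) \<Rightarrow> nat" where
  "mdegree \<alpha> = (\<Sum>i\<in>UNIV. \<alpha> i)"

lemma monom_zero [simp]: "monom p x 0 = 1"
  by (simp add: monom_def)

lemma mdegree_zero [simp]: "mdegree 0 = 0"
  by (simp add: mdegree_def)

lemma monom_add: "monom p x (\<alpha> + \<beta>) = monom p x \<alpha> * monom p x \<beta>"
  by (simp add: monom_def power_add prod.distrib)

lemma mdegree_add: "mdegree (\<alpha> + \<beta>) = mdegree \<alpha> + mdegree \<beta>"
  by (simp add: mdegree_def sum.distrib)

lemma monom_center: "monom p p \<alpha> = (if \<alpha> = 0 then 1 else 0)"
proof (cases "\<alpha> = 0")
  case False
  then obtain i where "\<alpha> i \<noteq> 0" by (auto simp: fun_eq_iff)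
  then have "monom p p \<alpha> = 0"
    unfolding monom_def by (intro prod_zero) auto
  with False show ?thesis by simp
qed simp

lemma mdegree_ge_1: "\<alpha> \<noteq> 0 \<Longrightarrow> 1 \<le> mdegree (\<alpha> :: 'n::finite \<Rightarrow> nat)"
proof -
  assume "\<alpha> \<noteq> 0"
  then obtain i where "\<alpha> i \<noteq> 0" by (auto simp: fun_eq_iff)
  then have "1 \<le> \<alpha> i" by simp
  also have "\<alpha> i \<le> mdegree \<alpha>" unfolding mdegree_def by (rule member_le_sum) auto
  finally show ?thesis .
qed

lemma abs_monom_le:
  assumes "dist p x \<le> s"
  shows "\<bar>monom p x \<alpha>\<bar> \<le> s ^ mdegree \<alpha>"
proof -
  have "\<bar>x $ i - p $ i\<bar> \<le> s" for i
    using component_le_norm_cart[of "x - p" i] assms by (simp add: dist_norm norm_minus_commute)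
  then have "(\<Prod>i\<in>UNIV. \<bar>x $ i - p $ i\<bar> ^ \<alpha> i) \<le> (\<Prod>i\<in>UNIV. s ^ \<alpha> i)"
    by (intro prod_mono) (simp add: power_mono)
  then show ?thesis by (simp add: monom_def mdegree_def abs_prod power_abs power_sum)
qed

definition splits :: "('n \<Rightarrow> nat) \<Rightarrow> (('n \<Rightarrow> nat) \<times> ('n \<Rightarrow> nat)) set" where
  "splits \<gamma> = {(\<alpha>, \<beta>). \<alpha> + \<beta> = \<gamma>}"

lemma finite_splits: "finite (splits (\<gamma> :: 'n::finite \<Rightarrow> nat))"
proof -
  have "splits \<gamma> \<subseteq> PiE UNIV (\<lambda>i. {..\<gamma> i}) \<times> PiE UNIV (\<lambda>i. {..\<gamma> i})"
    by (auto simp: splits_def PiE_UNIV_domain le_iff_add)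
  then show ?thesis by (rule finite_subset) (intro finite_SigmaI finite_PiE; simp)
qed

lemma has_sum_regroup_splits:
  fixes F :: "('n::finite \<Rightarrow> nat) \<times> ('n \<Rightarrow> nat) \<Rightarrow> real"
  assumes "(F has_sum S) UNIV"
  shows "((\<lambda>\<gamma>. \<Sum>q\<in>splits \<gamma>. F q) has_sum S) UNIV"
proof -
  have "bij_betw (\<lambda>q. (fst q + snd q, q)) UNIV (Sigma UNIV splits)"
    by (rule bij_betwI[where g=snd]) (auto simp: splits_def)
  from has_sum_reindex_bij_betw[OF this, of "F \<circ> snd"] assms
  have "((F \<circ> snd) has_sum S) (Sigma UNIV splits)" by simp
  then show ?thesis
    by (rule has_sum_Sigma') (simp add: finite_splits)
qed

lemma has_sum_mult_abs:
  fixes f :: "'a \<Rightarrow> real" and g :: "'b \<Rightarrow> real"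
  assumes "(f has_sum F) A" "(\<lambda>a. norm (f a)) summable_on A"
    and "(g has_sum G) B" "(\<lambda>b. norm (g b)) summable_on B"
  shows "((\<lambda>(a, b). f a * g b) has_sum F * G) (A \<times> B)"
proof -
  let ?h = "\<lambda>q. f (fst q) * g (snd q)"
  have "infsum (\<lambda>b. norm (?h (a, b))) B = norm (f a) * infsum (\<lambda>b. norm (g b)) B" for a
    by (simp add: abs_mult infsum_cmult_right')
  moreover have "infsum (\<lambda>b. norm (g b)) B \<ge> 0"
    by (rule infsum_nonneg) simp
  ultimately have "(\<lambda>a. norm (infsum (\<lambda>b. norm (?h (a, b))) B)) summable_on A"
    using assms(2) by (simp add: summable_on_cmult_left abs_mult)
  moreover have "\<forall>a\<in>A. (\<lambda>b. norm (?h (a, b))) summable_on B"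
    using assms(4) by (simp add: abs_mult summable_on_cmult_right)
  ultimately have abs: "(\<lambda>q. norm (?h q)) summable_on Sigma A (\<lambda>_. B)"
    using Infinite_Sum.abs_summable_on_Sigma_iff[where f="?h" and A=A and B="\<lambda>_. B"] by blast
  have "(?h has_sum F * G) (Sigma A (\<lambda>_. B))"
  proof (rule has_sum_SigmaI[where g="\<lambda>a. f a * G"])
    show "((\<lambda>b. ?h (a, b)) has_sum f a * G) B" for a
      using has_sum_cmult_right[OF assms(3)] by simp
    show "((\<lambda>a. f a * G) has_sum F * G) A"
      by (rule has_sum_cmult_left[OF assms(1)])
    show "?h summable_on Sigma A (\<lambda>_. B)"
      by (rule abs_summable_summable[OF abs])
  qed
  then show ?thesis by (simp add: case_prod_unfold)
qed

lemma has_sum_cauchy_product: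
  fixes f g :: "('n::finite \<Rightarrow> nat) \<Rightarrow> real"
  assumes "(f has_sum F) UNIV" "(\<lambda>a. norm (f a)) summable_on UNIV"
    and "(g has_sum G) UNIV" "(\<lambda>b. norm (g b)) summable_on UNIV"
  shows "((\<lambda>\<gamma>. \<Sum>(\<alpha>, \<beta>)\<in>splits \<gamma>. f \<alpha> * g \<beta>) has_sum F * G) UNIV"
proof -
  have "((\<lambda>(\<alpha>, \<beta>). f \<alpha> * g \<beta>) has_sum F * G) UNIV"
    using has_sum_mult_abs[OF assms] by simp
  then show ?thesis by (rule has_sum_regroup_splits)
qed

definition has_pseries ::
    "real^'n \<Rightarrow> real \<Rightarrow> (('n \<Rightarrow> nat) \<Rightarrow> real) \<Rightarrow> (real^'n \<Rightarrow> real) \<Rightarrow> bool" where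
  "has_pseries p r c f \<longleftrightarrow> (\<lambda>\<alpha>. \<bar>c \<alpha>\<bar> * r ^ mdegree \<alpha>) summable_on UNIV \<and>
      (\<forall>x\<in>ball p r. ((\<lambda>\<alpha>. monom p x \<alpha> * c \<alpha>) has_sum f x) UNIV)"

definition pseries_norm :: "(('n::finite \<Rightarrow> nat) \<Rightarrow> real) \<Rightarrow> real \<Rightarrow> real" where
  "pseries_norm c r = (\<Sum>\<^sub>\<infinity>\<alpha>. \<bar>c \<alpha>\<bar> * r ^ mdegree \<alpha>)"

lemma pseries_norm_nonneg: "0 \<le> r \<Longrightarrow> 0 \<le> pseries_norm c r"
  unfolding pseries_norm_def by (rule infsum_nonneg) simp

lemma has_pseries_norm:
  "has_pseries p r c f \<Longrightarrow> ((\<lambda>\<alpha>. \<bar>c \<alpha>\<bar> * r ^ mdegree \<alpha>) has_sum pseries_norm c r) UNIV"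
  unfolding has_pseries_def pseries_norm_def by (blast intro: has_sum_infsum)

lemma has_pseries_abs_summable:
  assumes "has_pseries p r c f" "dist p x \<le> r"
  shows "(\<lambda>\<alpha>. norm (monom p x \<alpha> * c \<alpha>)) summable_on UNIV"
proof (rule Infinite_Sum.abs_summable_on_comparison_test')
  show "(\<lambda>\<alpha>. \<bar>c \<alpha>\<bar> * r ^ mdegree \<alpha>) summable_on UNIV"
    using assms(1) by (simp add: has_pseries_def)
  show "norm (monom p x \<alpha> * c \<alpha>) \<le> \<bar>c \<alpha>\<bar> * r ^ mdegree \<alpha>" for \<alpha>
    using abs_monom_le[OF assms(2)] by (simp add: abs_mult mult.commute mult_left_mono)
qed

lemma has_pseries_abs_le:
  assumes "has_pseries p r c f" "x \<in> ball p r"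
  shows "\<bar>f x\<bar> \<le> pseries_norm c r"
proof -
  have "((\<lambda>\<alpha>. monom p x \<alpha> * c \<alpha>) has_sum f x) UNIV"
    using assms by (simp add: has_pseries_def)
  moreover have "\<bar>monom p x \<alpha> * c \<alpha>\<bar> \<le> \<bar>c \<alpha>\<bar> * r ^ mdegree \<alpha>" for \<alpha>
    using abs_monom_le[of p x r \<alpha>] assms(2) by (simp add: abs_mult mult.commute mult_left_mono)
  ultimately show ?thesis
    using norm_infsum_le has_pseries_norm[OF assms(1)] by fastforce
qed

lemma has_pseries_smaller_radius:
  assumes "has_pseries p r c f" "0 \<le> s" "s \<le> r"
  shows "has_pseries p s c f"
  unfolding has_pseries_def
proof
  show "(\<lambda>\<alpha>. \<bar>c \<alpha>\<bar> * s ^ mdegree \<alpha>) summable_on UNIV"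
    by (rule summable_on_comparison_test[where f="\<lambda>\<alpha>. \<bar>c \<alpha>\<bar> * r ^ mdegree \<alpha>"])
       (use assms in \<open>auto simp: has_pseries_def intro!: mult_left_mono power_mono\<close>)
  show "\<forall>x\<in>ball p s. ((\<lambda>\<alpha>. monom p x \<alpha> * c \<alpha>) has_sum f x) UNIV"
    using assms by (auto simp: has_pseries_def)
qed

lemma has_pseries_center:
  assumes "has_pseries p r c f" "0 < r"
  shows "f p = c 0"
proof -
  have "((\<lambda>\<alpha>. monom p p \<alpha> * c \<alpha>) has_sum f p) UNIV"
    using assms by (simp add: has_pseries_def)
  moreover have "((\<lambda>\<alpha>. monom p p \<alpha> * c \<alpha>) has_sum c 0) UNIV"
    by (rule has_sum_finite_neutralI[where B="{0}"]) (auto simp: monom_center)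
  ultimately show ?thesis using has_sum_unique by blast
qed

definition const_coeffs :: "real \<Rightarrow> ('n \<Rightarrow> nat) \<Rightarrow> real" where
  "const_coeffs k \<alpha> = (if \<alpha> = 0 then k else 0)"

lemma has_pseries_const: "has_pseries p r (const_coeffs k) (\<lambda>_. k)"
  and pseries_norm_const: "pseries_norm (const_coeffs k) r = \<bar>k\<bar>"
proof -
  have norm: "((\<lambda>\<alpha>. \<bar>const_coeffs k \<alpha>\<bar> * r ^ mdegree \<alpha>) has_sum \<bar>k\<bar>) UNIV"
    by (rule has_sum_finite_neutralI[where B="{0}"]) (auto simp: const_coeffs_def)
  then show "pseries_norm (const_coeffs k) r = \<bar>k\<bar>"
    unfolding pseries_norm_def by (rule infsumI)
  have "((\<lambda>\<alpha>. monom p x \<alpha> * const_coeffs k \<alpha>) has_sum k) UNIV" for x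
    by (rule has_sum_finite_neutralI[where B="{0}"]) (auto simp: const_coeffs_def)
  with norm show "has_pseries p r (const_coeffs k) (\<lambda>_. k)"
    unfolding has_pseries_def by (blast intro: has_sum_imp_summable)
qed

lemma has_pseries_coord:
  fixes i :: "'n::finite"
  defines "e \<equiv> \<lambda>j. if j = i then 1 else 0 :: nat"
  shows "has_pseries p r (\<lambda>\<alpha>. if \<alpha> = 0 then p $ i else if \<alpha> = e then 1 else 0) (\<lambda>x. x $ i)"
proof -
  have e0: "e \<noteq> 0" by (auto simp: e_def fun_eq_iff)
  have monom_e: "monom p x e = x $ i - p $ i" for x
  proof -
    have "monom p x e = (\<Prod>j\<in>UNIV. if j = i then x $ j - p $ j else 1)"
      unfolding monom_def e_def by (rule prod.cong) auto
    then show ?thesis by simp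
  qed
  show ?thesis
    unfolding has_pseries_def
    by (intro conjI ballI has_sum_imp_summable has_sum_finite_neutralI[where B="{0, e}"])
       (auto simp: e0 e0[symmetric] monom_e)
qed

lemma has_pseries_add:
  assumes "has_pseries p r c f" "has_pseries p r d g" "0 \<le> r"
  shows "has_pseries p r (c + d) (\<lambda>x. f x + g x)"
  unfolding has_pseries_def
proof
  have "(\<lambda>\<alpha>. \<bar>c \<alpha>\<bar> * r ^ mdegree \<alpha> + \<bar>d \<alpha>\<bar> * r ^ mdegree \<alpha>) summable_on UNIV"
    using assms by (intro summable_on_add) (auto simp: has_pseries_def)
  then show "(\<lambda>\<alpha>. \<bar>(c + d) \<alpha>\<bar> * r ^ mdegree \<alpha>) summable_on UNIV"
    by (rule summable_on_comparison_test)
       (use assms(3) in \<open>auto simp: distrib_right[symmetric] intro!: mult_right_mono abs_triangle_ineq\<close>)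
  show "\<forall>x\<in>ball p r. ((\<lambda>\<alpha>. monom p x \<alpha> * (c + d) \<alpha>) has_sum f x + g x) UNIV"
    using assms by (auto simp: has_pseries_def distrib_left intro!: has_sum_add)
qed

definition cauchy_coeffs :: "(('n \<Rightarrow> nat) \<Rightarrow> real) \<Rightarrow> (('n \<Rightarrow> nat) \<Rightarrow> real) \<Rightarrow> ('n \<Rightarrow> nat) \<Rightarrow> real" where
  "cauchy_coeffs c d \<gamma> = (\<Sum>(\<alpha>, \<beta>)\<in>splits \<gamma>. c \<alpha> * d \<beta>)"

lemma abs_cauchy_coeffs_le:
  assumes "0 \<le> r"
  shows "\<bar>cauchy_coeffs c d \<gamma>\<bar> * r ^ mdegree \<gamma> \<le>
    (\<Sum>(\<alpha>, \<beta>)\<in>splits \<gamma>. (\<bar>c \<alpha>\<bar> * r ^ mdegree \<alpha>) * (\<bar>d \<beta>\<bar> * r ^ mdegree \<beta>))"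
proof -
  have "\<bar>cauchy_coeffs c d \<gamma>\<bar> * r ^ mdegree \<gamma> \<le> (\<Sum>(\<alpha>, \<beta>)\<in>splits \<gamma>. \<bar>c \<alpha> * d \<beta>\<bar>) * r ^ mdegree \<gamma>"
    unfolding cauchy_coeffs_def case_prod_unfold using assms
    by (intro mult_right_mono sum_abs) auto
  also have "\<dots> = (\<Sum>(\<alpha>, \<beta>)\<in>splits \<gamma>. (\<bar>c \<alpha>\<bar> * r ^ mdegree \<alpha>) * (\<bar>d \<beta>\<bar> * r ^ mdegree \<beta>))"
    unfolding sum_distrib_right
    by (intro sum.cong) (auto simp: splits_def mdegree_add power_add abs_mult)
  finally show ?thesis .
qed

lemma has_pseries_mult:
  fixes c d :: "('n::finite \<Rightarrow> nat) \<Rightarrow> real"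
  assumes "has_pseries p r c f" "has_pseries p r d g" "0 \<le> r"
  shows "has_pseries p r (cauchy_coeffs c d) (\<lambda>x. f x * g x)"
    and "pseries_norm (cauchy_coeffs c d) r \<le> pseries_norm c r * pseries_norm d r"
proof -
  let ?C = "\<lambda>\<alpha>. \<bar>c \<alpha>\<bar> * r ^ mdegree \<alpha>" and ?D = "\<lambda>\<alpha>. \<bar>d \<alpha>\<bar> * r ^ mdegree \<alpha>"
  have "(?C has_sum pseries_norm c r) UNIV" "(?D has_sum pseries_norm d r) UNIV"
    using assms(1,2) by (simp_all add: has_pseries_norm)
  moreover have "(\<lambda>\<alpha>. norm (?C \<alpha>)) = ?C" "(\<lambda>\<alpha>. norm (?D \<alpha>)) = ?D"
    using assms(3) by (auto simp: abs_mult)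
  ultimately have maj: "((\<lambda>\<gamma>. \<Sum>(\<alpha>, \<beta>)\<in>splits \<gamma>. ?C \<alpha> * ?D \<beta>)
      has_sum pseries_norm c r * pseries_norm d r) UNIV"
    by (intro has_sum_cauchy_product) (auto dest: has_sum_imp_summable)
  have bound: "\<bar>cauchy_coeffs c d \<gamma>\<bar> * r ^ mdegree \<gamma> \<le> (\<Sum>(\<alpha>, \<beta>)\<in>splits \<gamma>. ?C \<alpha> * ?D \<beta>)" for \<gamma>
    by (rule abs_cauchy_coeffs_le[OF assms(3)])
  have summable: "(\<lambda>\<gamma>. \<bar>cauchy_coeffs c d \<gamma>\<bar> * r ^ mdegree \<gamma>) summable_on UNIV"
    by (rule summable_on_comparison_test[OF has_sum_imp_summable[OF maj]]) (use bound assms(3) in auto)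
  show "pseries_norm (cauchy_coeffs c d) r \<le> pseries_norm c r * pseries_norm d r"
    unfolding pseries_norm_def
    using infsum_mono[OF summable has_sum_imp_summable[OF maj] bound] infsumI[OF maj]
    by (simp add: pseries_norm_def)
  have "((\<lambda>\<gamma>. monom p x \<gamma> * cauchy_coeffs c d \<gamma>) has_sum f x * g x) UNIV"
    if x: "x \<in> ball p r" for x
  proof -
    have "((\<lambda>\<gamma>. \<Sum>(\<alpha>, \<beta>)\<in>splits \<gamma>. (monom p x \<alpha> * c \<alpha>) * (monom p x \<beta> * d \<beta>)) has_sum f x * g x) UNIV"
      using assms x
      by (intro has_sum_cauchy_product has_pseries_abs_summable) (auto simp: has_pseries_def)
    moreover have "(\<Sum>(\<alpha>, \<beta>)\<in>splits \<gamma>. (monom p x \<alpha> * c \<alpha>) * (monom p x \<beta> * d \<beta>))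
        = monom p x \<gamma> * cauchy_coeffs c d \<gamma>" for \<gamma>
      unfolding cauchy_coeffs_def sum_distrib_left
      by (intro sum.cong) (auto simp: splits_def monom_add)
    ultimately show ?thesis by simp
  qed
  with summable show "has_pseries p r (cauchy_coeffs c d) (\<lambda>x. f x * g x)"
    by (simp add: has_pseries_def)
qed

primrec coeff_power :: "(('n \<Rightarrow> nat) \<Rightarrow> real) \<Rightarrow> nat \<Rightarrow> ('n \<Rightarrow> nat) \<Rightarrow> real" where
  "coeff_power c 0 = const_coeffs 1"
| "coeff_power c (Suc m) = cauchy_coeffs c (coeff_power c m)"

lemma has_pseries_power:
  fixes c :: "('n::finite \<Rightarrow> nat) \<Rightarrow> real"
  assumes "has_pseries p r c f" "0 \<le> r"
  shows "has_pseries p r (coeff_power c m) (\<lambda>x. f x ^ m) \<and>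
         pseries_norm (coeff_power c m) r \<le> pseries_norm c r ^ m"
proof (induction m)
  case 0
  show ?case by (simp add: has_pseries_const pseries_norm_const)
next
  case (Suc m)
  then have IH: "has_pseries p r (coeff_power c m) (\<lambda>x. f x ^ m)" by simp
  have "pseries_norm (coeff_power c (Suc m)) r \<le> pseries_norm c r * pseries_norm (coeff_power c m) r"
    using has_pseries_mult(2)[OF assms(1) IH assms(2)] by simp
  also have "\<dots> \<le> pseries_norm c r * pseries_norm c r ^ m"
    using Suc.IH pseries_norm_nonneg[OF assms(2), of c] by (intro mult_left_mono) auto
  finally show ?case using has_pseries_mult(1)[OF assms(1) IH assms(2)] by simp
qed

lemma summable_pseries_majorants:
  fixes c :: "nat \<Rightarrow> ('n::finite \<Rightarrow> nat) \<Rightarrow> real"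
  assumes ser: "\<And>m. has_pseries p s (c m) (f m)"
    and norms: "(\<lambda>m. pseries_norm (c m) s) summable_on UNIV" and s: "0 \<le> s"
  shows "(\<lambda>(m, \<alpha>). \<bar>c m \<alpha>\<bar> * s ^ mdegree \<alpha>) summable_on UNIV \<times> UNIV"
proof -
  define H where "H m \<alpha> = \<bar>c m \<alpha>\<bar> * s ^ mdegree \<alpha>" for m \<alpha>
  have H_nonneg: "norm (H m \<alpha>) = H m \<alpha>" for m \<alpha>
    using s by (simp add: H_def)
  have "(\<lambda>\<alpha>. norm (H m \<alpha>)) summable_on UNIV" "(\<Sum>\<^sub>\<infinity>\<alpha>. norm (H m \<alpha>)) = pseries_norm (c m) s" for m
    using has_pseries_norm[OF ser, of m] unfolding H_nonneg
    by (auto simp: H_def infsumI dest: has_sum_imp_summable)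
  moreover have "(\<lambda>m. norm (pseries_norm (c m) s)) summable_on UNIV"
  proof -
    have "norm (pseries_norm (c m) s) = pseries_norm (c m) s" for m
      using pseries_norm_nonneg[OF s, of "c m"] by simp
    then show ?thesis using norms by simp
  qed
  ultimately have "(\<lambda>q. norm ((\<lambda>(m, \<alpha>). H m \<alpha>) q)) summable_on Sigma UNIV (\<lambda>_. UNIV)"
    using Infinite_Sum.abs_summable_on_Sigma_iff[where f="\<lambda>(m, \<alpha>). H m \<alpha>" and A=UNIV and B="\<lambda>_. UNIV"]
    by simp
  then show ?thesis
    unfolding H_def by (rule abs_summable_summable)
qed

lemma summable_pseries_infsum_coeffs:
  fixes c :: "nat \<Rightarrow> ('n::finite \<Rightarrow> nat) \<Rightarrow> real"
  assumes maj: "(\<lambda>(m, \<alpha>). \<bar>c m \<alpha>\<bar> * s ^ mdegree \<alpha>) summable_on UNIV \<times> UNIV" and s: "0 < s"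
  shows "(\<lambda>\<alpha>. \<bar>\<Sum>\<^sub>\<infinity>m. c m \<alpha>\<bar> * s ^ mdegree \<alpha>) summable_on UNIV"
proof -
  define H where "H m \<alpha> = \<bar>c m \<alpha>\<bar> * s ^ mdegree \<alpha>" for m \<alpha>
  have H_swap: "(\<lambda>(\<alpha>, m). H m \<alpha>) summable_on UNIV \<times> UNIV"
    using maj summable_on_swap[of "\<lambda>(m, \<alpha>). H m \<alpha>" UNIV UNIV] by (simp add: H_def)
  show ?thesis
  proof (rule summable_on_comparison_test)
    show "(\<lambda>\<alpha>. \<Sum>\<^sub>\<infinity>m. H m \<alpha>) summable_on UNIV"
      using H_swap summable_on_Sigma_banach[of "\<lambda>\<alpha> m. H m \<alpha>" UNIV "\<lambda>_. UNIV"] by simp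
    fix \<alpha>
    have "(\<lambda>m. H m \<alpha>) summable_on UNIV"
      using H_swap summable_on_SigmaD1[of "\<lambda>\<alpha> m. H m \<alpha>" UNIV "\<lambda>_. UNIV"] by simp
    then have "(\<lambda>m. \<bar>c m \<alpha>\<bar>) summable_on UNIV"
      using summable_on_cmult_left'[of "s ^ mdegree \<alpha>" "\<lambda>m. \<bar>c m \<alpha>\<bar>"] s by (simp add: H_def)
    then have "\<bar>\<Sum>\<^sub>\<infinity>m. c m \<alpha>\<bar> * s ^ mdegree \<alpha> \<le> (\<Sum>\<^sub>\<infinity>m. \<bar>c m \<alpha>\<bar>) * s ^ mdegree \<alpha>"
      using norm_infsum_bound[of "\<lambda>m. c m \<alpha>" UNIV] s by (simp add: mult_right_mono)
    then show "\<bar>\<Sum>\<^sub>\<infinity>m. c m \<alpha>\<bar> * s ^ mdegree \<alpha> \<le> (\<Sum>\<^sub>\<infinity>m. H m \<alpha>)"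
      by (simp add: H_def infsum_cmult_left')
  qed (use s in simp)
qed

lemma has_pseries_infsum:
  fixes c :: "nat \<Rightarrow> ('n::finite \<Rightarrow> nat) \<Rightarrow> real"
  assumes ser: "\<And>m. has_pseries p s (c m) (f m)"
    and norms: "(\<lambda>m. pseries_norm (c m) s) summable_on UNIV" and s: "0 < s"
  shows "has_pseries p s (\<lambda>\<alpha>. \<Sum>\<^sub>\<infinity>m. c m \<alpha>) (\<lambda>x. \<Sum>\<^sub>\<infinity>m. f m x)"
proof -
  define H where "H m \<alpha> = \<bar>c m \<alpha>\<bar> * s ^ mdegree \<alpha>" for m \<alpha>
  have maj: "(\<lambda>(m, \<alpha>). H m \<alpha>) summable_on UNIV \<times> UNIV"
    unfolding H_def using ser norms s by (intro summable_pseries_majorants) auto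
  have "(\<lambda>\<alpha>. \<bar>\<Sum>\<^sub>\<infinity>m. c m \<alpha>\<bar> * s ^ mdegree \<alpha>) summable_on UNIV"
    using maj s unfolding H_def by (rule summable_pseries_infsum_coeffs)
  moreover have "((\<lambda>\<alpha>. monom p x \<alpha> * (\<Sum>\<^sub>\<infinity>m. c m \<alpha>)) has_sum (\<Sum>\<^sub>\<infinity>m. f m x)) UNIV"
    if x: "x \<in> ball p s" for x
  proof -
    define G where "G m \<alpha> = monom p x \<alpha> * c m \<alpha>" for m \<alpha>
    have "norm (G m \<alpha>) \<le> H m \<alpha>" for m \<alpha>
      using abs_monom_le[of p x s \<alpha>] x
      by (simp add: G_def H_def abs_mult mult.commute mult_left_mono)
    then have "(\<lambda>(m, \<alpha>). norm (G m \<alpha>)) summable_on UNIV \<times> UNIV"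
      using Infinite_Sum.abs_summable_on_comparison_test'[of "\<lambda>(m, \<alpha>). H m \<alpha>" "UNIV \<times> UNIV" "\<lambda>(m, \<alpha>). G m \<alpha>"]
        maj
      by (auto simp: case_prod_unfold)
    then obtain S where S: "((\<lambda>(m, \<alpha>). G m \<alpha>) has_sum S) (UNIV \<times> UNIV)"
      using abs_summable_summable[of "\<lambda>(m, \<alpha>). G m \<alpha>"] by (auto simp: case_prod_unfold summable_on_def)
    have "((\<lambda>m. f m x) has_sum S) UNIV"
      using S ser x by (intro has_sum_Sigma'[where f="\<lambda>(m, \<alpha>). G m \<alpha>" and B="\<lambda>_. UNIV"]) (auto simp: has_pseries_def G_def)
    then have fS: "(\<Sum>\<^sub>\<infinity>m. f m x) = S" by (rule infsumI)
    have S': "((\<lambda>(\<alpha>, m). G m \<alpha>) has_sum S) (UNIV \<times> UNIV)"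
      using S has_sum_swap[of "\<lambda>(m, \<alpha>). G m \<alpha>" UNIV UNIV S] by simp
    have "((\<lambda>m. G m \<alpha>) has_sum monom p x \<alpha> * (\<Sum>\<^sub>\<infinity>m. c m \<alpha>)) UNIV" for \<alpha>
    proof -
      have "(\<lambda>m. G m \<alpha>) summable_on UNIV"
        using summable_on_SigmaD1[of "\<lambda>\<alpha> m. G m \<alpha>" UNIV "\<lambda>_. UNIV"] S' by (auto dest: has_sum_imp_summable)
      then show ?thesis by (simp add: G_def infsum_cmult_right' summable_iff_has_sum_infsum)
    qed
    with S' show ?thesis
      unfolding fS by (intro has_sum_Sigma'[where f="\<lambda>(\<alpha>, m). G m \<alpha>" and B="\<lambda>_. UNIV"]) auto
  qed
  ultimately show ?thesis by (simp add: has_pseries_def)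
qed

lemma has_pseries_geometric:
  fixes c :: "('n::finite \<Rightarrow> nat) \<Rightarrow> real"
  assumes ser: "has_pseries p s c f" and s: "0 < s" and small: "pseries_norm c s < 1"
  shows "has_pseries p s (\<lambda>\<alpha>. \<Sum>\<^sub>\<infinity>m. coeff_power c m \<alpha>) (\<lambda>x. 1 / (1 - f x))"
proof -
  have pow: "has_pseries p s (coeff_power c m) (\<lambda>x. f x ^ m)"
    and pow_norm: "pseries_norm (coeff_power c m) s \<le> pseries_norm c s ^ m" for m
    using has_pseries_power[OF ser] s by auto
  have "(\<lambda>m. pseries_norm c s ^ m) summable_on UNIV"
    using small pseries_norm_nonneg[of s c] s
    by (intro summable_nonneg_imp_summable_on summable_geometric) auto
  then have "(\<lambda>m. pseries_norm (coeff_power c m) s) summable_on UNIV"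
    by (rule summable_on_comparison_test) (use pow_norm pseries_norm_nonneg[OF less_imp_le[OF s]] in auto)
  from has_pseries_infsum[OF pow this s]
  have geo: "has_pseries p s (\<lambda>\<alpha>. \<Sum>\<^sub>\<infinity>m. coeff_power c m \<alpha>) (\<lambda>x. \<Sum>\<^sub>\<infinity>m. f x ^ m)" .
  have "(\<Sum>\<^sub>\<infinity>m. f x ^ m) = 1 / (1 - f x)" if "x \<in> ball p s" for x
  proof -
    have "\<bar>f x\<bar> < 1" using has_pseries_abs_le[OF ser that] small by simp
    then show ?thesis
      by (intro infsumI norm_summable_imp_has_sum)
         (auto simp: geometric_sums summable_geometric power_abs)
  qed
  with geo show ?thesis by (simp add: has_pseries_def)
qed

lemma pseries_norm_small:
  assumes ser: "has_pseries p r c f" and r: "0 < r" and "f p = 0"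
  obtains s where "0 < s" "s \<le> r" "pseries_norm c s \<le> 1 / 2"
proof -
  define E where "E = pseries_norm c r"
  define s where "s = r / (2 * (E + 1))"
  have E: "0 \<le> E" using r by (simp add: E_def pseries_norm_nonneg)
  have s: "0 < s" "s \<le> r" using r E by (auto simp: s_def field_simps)
  have c0: "c 0 = 0" using has_pseries_center[OF ser r] \<open>f p = 0\<close> by simp
  have summand_le: "\<bar>c \<alpha>\<bar> * s ^ mdegree \<alpha> \<le> (s / r) * (\<bar>c \<alpha>\<bar> * r ^ mdegree \<alpha>)" for \<alpha>
  proof (cases "\<alpha> = 0")
    case False
    have "s ^ mdegree \<alpha> = (s / r) ^ mdegree \<alpha> * r ^ mdegree \<alpha>"
      using r by (simp add: power_divide)
    also have "\<dots> \<le> (s / r) ^ 1 * r ^ mdegree \<alpha>"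
      using s r mdegree_ge_1[OF False] by (intro mult_right_mono power_decreasing) auto
    finally have "s ^ mdegree \<alpha> \<le> (s / r) * r ^ mdegree \<alpha>" by simp
    then have "\<bar>c \<alpha>\<bar> * s ^ mdegree \<alpha> \<le> \<bar>c \<alpha>\<bar> * ((s / r) * r ^ mdegree \<alpha>)"
      by (rule mult_left_mono) simp
    then show ?thesis by (simp only: ac_simps)
  qed (simp add: c0)
  have "pseries_norm c s \<le> (\<Sum>\<^sub>\<infinity>\<alpha>. (s / r) * (\<bar>c \<alpha>\<bar> * r ^ mdegree \<alpha>))"
    unfolding pseries_norm_def using has_pseries_smaller_radius[OF ser] ser s
    by (intro infsum_mono summand_le summable_on_cmult_right) (auto simp: has_pseries_def)
  also have "\<dots> = (s / r) * E"
    unfolding E_def pseries_norm_def by (rule infsum_cmult_right')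
  also have "\<dots> = E / (2 * (E + 1))"
    using r by (simp add: s_def)
  also have "\<dots> \<le> 1 / 2"
    using E by (simp add: field_simps)
  finally show ?thesis using s that by blast
qed

definition real_analytic_at :: "(real^'n \<Rightarrow> real) \<Rightarrow> real^'n \<Rightarrow> bool" where
  "real_analytic_at f p \<longleftrightarrow> (\<exists>r>0. \<exists>c. has_pseries p r c f)"

lemma real_analytic_at_common_radius:
  assumes "real_analytic_at f p" "real_analytic_at g p"
  obtains r c d where "0 < r" "has_pseries p r c f" "has_pseries p r d g"
proof -
  obtain r1 c where r1: "0 < r1" "has_pseries p r1 c f"
    using assms(1) by (auto simp: real_analytic_at_def)
  obtain r2 d where r2: "0 < r2" "has_pseries p r2 d g"
    using assms(2) by (auto simp: real_analytic_at_def)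
  have "has_pseries p (min r1 r2) c f" "has_pseries p (min r1 r2) d g"
    using r1 r2 by (auto intro: has_pseries_smaller_radius)
  with r1 r2 show ?thesis by (intro that[of "min r1 r2" c d]) auto
qed

lemma real_analytic_at_const: "real_analytic_at (\<lambda>_. k) p"
  unfolding real_analytic_at_def using has_pseries_const[of p 1 k] by (intro exI[of _ 1]) auto

lemma real_analytic_at_coord: "real_analytic_at (\<lambda>x. x $ i) p"
  unfolding real_analytic_at_def using has_pseries_coord[where i=i and p=p and r=1] by (intro exI[of _ 1]) auto

lemma real_analytic_at_add:
  assumes "real_analytic_at f p" "real_analytic_at g p"
  shows "real_analytic_at (\<lambda>x. f x + g x) p"
proof -
  obtain r c d where "0 < r" "has_pseries p r c f" "has_pseries p r d g"
    using assms by (rule real_analytic_at_common_radius)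
  then show ?thesis
    unfolding real_analytic_at_def by (blast intro: has_pseries_add less_imp_le)
qed

lemma real_analytic_at_mult:
  assumes "real_analytic_at f p" "real_analytic_at g p"
  shows "real_analytic_at (\<lambda>x. f x * g x) p"
proof -
  obtain r c d where "0 < r" "has_pseries p r c f" "has_pseries p r d g"
    using assms by (rule real_analytic_at_common_radius)
  then show ?thesis
    unfolding real_analytic_at_def by (blast intro: has_pseries_mult(1) less_imp_le)
qed

lemma real_analytic_at_cmult: "real_analytic_at f p \<Longrightarrow> real_analytic_at (\<lambda>x. k * f x) p"
  by (rule real_analytic_at_mult[OF real_analytic_at_const])

lemma real_analytic_at_diff:
  assumes "real_analytic_at f p" "real_analytic_at g p"
  shows "real_analytic_at (\<lambda>x. f x - g x) p"
  using real_analytic_at_add[OF assms(1) real_analytic_at_cmult[OF assms(2), of "-1"]] by simp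

lemma real_analytic_at_geometric:
  assumes "real_analytic_at f p" "f p = 0"
  shows "real_analytic_at (\<lambda>x. 1 / (1 - f x)) p"
proof -
  obtain r c where r: "0 < r" and ser: "has_pseries p r c f"
    using assms(1) by (auto simp: real_analytic_at_def)
  obtain s where s: "0 < s" "s \<le> r" "pseries_norm c s \<le> 1 / 2"
    by (rule pseries_norm_small[OF ser r assms(2)])
  have "has_pseries p s c f"
    by (rule has_pseries_smaller_radius[OF ser]) (use s in auto)
  from has_pseries_geometric[OF this s(1)] s(3)
  have "has_pseries p s (\<lambda>\<alpha>. \<Sum>\<^sub>\<infinity>m. coeff_power c m \<alpha>) (\<lambda>x. 1 / (1 - f x))"
    by linarith
  with s(1) show ?thesis
    unfolding real_analytic_at_def by blast
qed

lemma real_analytic_at_inverse: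
  assumes "real_analytic_at f p" "f p \<noteq> 0"
  shows "real_analytic_at (\<lambda>x. 1 / f x) p"
proof -
  have "real_analytic_at (\<lambda>x. 1 - (1 / f p) * f x) p"
    by (rule real_analytic_at_diff[OF real_analytic_at_const real_analytic_at_cmult[OF assms(1)]])
  then have "real_analytic_at (\<lambda>x. 1 / (1 - (1 - (1 / f p) * f x))) p"
    by (rule real_analytic_at_geometric) (use assms(2) in simp)
  from real_analytic_at_cmult[OF this, of "1 / f p"] show ?thesis
    using assms(2) by simp
qed

lemma real_analytic_at_divide:
  assumes "real_analytic_at f p" "real_analytic_at g p" "g p \<noteq> 0"
  shows "real_analytic_at (\<lambda>x. f x / g x) p"
  using real_analytic_at_mult[OF assms(1) real_analytic_at_inverse[OF assms(2,3)]] by simp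

lemma real_analytic_at_sum:
  "finite S \<Longrightarrow> (\<And>j. j \<in> S \<Longrightarrow> real_analytic_at (f j) p) \<Longrightarrow> real_analytic_at (\<lambda>x. \<Sum>j\<in>S. f j x) p"
  by (induction S rule: finite_induct) (auto intro: real_analytic_at_const real_analytic_at_add)

lemma linear_eq_sum_coords:
  fixes l :: "real^'n \<Rightarrow> real"
  assumes "linear l"
  shows "l x = (\<Sum>i\<in>UNIV. x $ i * l (axis i 1))"
proof -
  have "l x = l (\<Sum>i\<in>UNIV. x $ i *\<^sub>R axis i 1)"
    using basis_expansion[of x] by (simp add: scalar_mult_eq_scaleR)
  also have "\<dots> = (\<Sum>i\<in>UNIV. x $ i * l (axis i 1))"
    using assms by (simp add: linear_sum linear_scale)
  finally show ?thesis .
qed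

lemma real_analytic_at_linear_comp:
  fixes l :: "real^'m \<Rightarrow> real" and F :: "real^'n \<Rightarrow> real^'m"
  assumes "linear l" "\<And>i. real_analytic_at (\<lambda>x. F x $ i) p"
  shows "real_analytic_at (\<lambda>x. l (F x)) p"
proof -
  have "real_analytic_at (\<lambda>x. \<Sum>i\<in>UNIV. F x $ i * l (axis i 1)) p"
    by (rule real_analytic_at_sum) (auto intro: real_analytic_at_mult[OF assms(2) real_analytic_at_const])
  then show ?thesis
    by (simp add: linear_eq_sum_coords[OF assms(1), symmetric])
qed

lemma real_analytic_at_linear: "linear l \<Longrightarrow> real_analytic_at l p"
  using real_analytic_at_linear_comp[of l "\<lambda>x. x"] real_analytic_at_coord by blast

lemma real_analytic_at_bilinear_comp:
  fixes h :: "real^'m \<Rightarrow> real^'m \<Rightarrow> real" and u w :: "real^'n \<Rightarrow> real^'m"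
  assumes "bilinear h" "\<And>i. real_analytic_at (\<lambda>x. u x $ i) p" "\<And>i. real_analytic_at (\<lambda>x. w x $ i) p"
  shows "real_analytic_at (\<lambda>x. h (u x) (w x)) p"
proof -
  have expand: "h (u x) (w x) = (\<Sum>i\<in>UNIV. u x $ i * h (axis i 1) (w x))" for x
    by (rule linear_eq_sum_coords) (use assms(1) in \<open>simp add: bilinear_def\<close>)
  have "real_analytic_at (\<lambda>x. h (axis i 1) (w x)) p" for i
    by (rule real_analytic_at_linear_comp[where l="h (axis i 1)"])
       (use assms(1,3) in \<open>simp_all add: bilinear_def\<close>)
  then have "real_analytic_at (\<lambda>x. \<Sum>i\<in>UNIV. u x $ i * h (axis i 1) (w x)) p"
    by (intro real_analytic_at_sum) (auto intro: real_analytic_at_mult[OF assms(2)])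
  then show ?thesis
    unfolding expand .
qed

lemma has_sum_componentwise:
  fixes f :: "'a \<Rightarrow> real^'n"
  assumes "\<And>i. ((\<lambda>a. f a $ i) has_sum S $ i) A"
  shows "(f has_sum S) A"
  using assms unfolding has_sum_def by (rule_tac vec_tendstoI) (simp add: sum_component)

lemma real_analytic_onI:
  fixes f :: "real^'n \<Rightarrow> real^'m"
  assumes "\<And>p j. p \<in> U \<Longrightarrow> real_analytic_at (\<lambda>x. f x $ j) p"
  shows "real_analytic_on f U"
  unfolding real_analytic_on_def
proof
  fix p assume "p \<in> U"
  then have "\<forall>j. \<exists>r c. 0 < r \<and> has_pseries p r c (\<lambda>x. f x $ j)"
    using assms by (auto simp: real_analytic_at_def)
  then obtain R C where RC: "\<And>j. 0 < R j" "\<And>j. has_pseries p (R j) (C j) (\<lambda>x. f x $ j)"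
    by metis
  define r where "r = Min (range R)"
  have r: "0 < r" "\<And>j. r \<le> R j"
    unfolding r_def using RC(1) by (subst Min_gr_iff) auto
  have "((\<lambda>\<alpha>. (\<Prod>i\<in>UNIV. (x $ i - p $ i) ^ \<alpha> i) *\<^sub>R (\<chi> j. C j \<alpha>)) has_sum f x) UNIV"
    if "x \<in> ball p r" for x
  proof (rule has_sum_componentwise)
    fix j
    have "x \<in> ball p (R j)" using that r(2)[of j] by auto
    then show "((\<lambda>\<alpha>. ((\<Prod>i\<in>UNIV. (x $ i - p $ i) ^ \<alpha> i) *\<^sub>R (\<chi> j. C j \<alpha>)) $ j) has_sum f x $ j) UNIV"
      using RC(2)[of j] by (simp add: has_pseries_def monom_def)
  qed
  with r(1) show "\<exists>r>0. \<exists>c :: ('n \<Rightarrow> nat) \<Rightarrow> real^'m. \<forall>x\<in>ball p r.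
      ((\<lambda>\<alpha>. (\<Prod>i\<in>UNIV. (x $ i - p $ i) ^ \<alpha> i) *\<^sub>R c \<alpha>) has_sum f x) UNIV"
    by (intro exI[of _ r] conjI exI[of _ "\<lambda>\<alpha>. \<chi> j. C j \<alpha>"] ballI)
qed

section \<open>Straightening a quadric in a hyperplane\<close>

lemma linear_axis_nonzero:
  fixes l :: "real^'n \<Rightarrow> real"
  assumes "linear l" "l u \<noteq> 0"
  obtains k where "l (axis k 1) \<noteq> 0"
proof -
  have "\<exists>k. l (axis k 1) \<noteq> 0"
  proof (rule ccontr)
    assume "\<not> ?thesis"
    then have "l u = 0" using linear_eq_sum_coords[OF assms(1), of u] by simp
    with assms(2) show False by simp
  qed
  then show ?thesis using that by blast
qed

lemma linear_coordinate_pair: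
  fixes a b :: "real^'n \<Rightarrow> real"
  assumes a: "linear a" and b: "linear b" and "a u = 1" "b u = 0" "b v = 1"
  obtains T :: "real^'n \<Rightarrow> real^'n" and i j
  where "linear T" "inj T" "i \<noteq> j" "\<And>x. T x $ i = a x" "\<And>x. T x $ j = b x"
proof -
  obtain j where j: "b (axis j 1) \<noteq> 0"
    using linear_axis_nonzero[OF b, of v] \<open>b v = 1\<close> by auto
  define a' where "a' x = a x - (a (axis j 1) / b (axis j 1)) * b x" for x
  have a': "linear a'"
    unfolding a'_def linear_iff using a b by (simp add: linear_add linear_scale algebra_simps add_divide_distrib)
  have a'_j: "a' (axis j 1) = 0"
    using j by (simp add: a'_def)
  obtain i where i: "a' (axis i 1) \<noteq> 0"
    using linear_axis_nonzero[OF a', of u] assms(3,4) by (auto simp: a'_def)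
  have ij: "i \<noteq> j" using i a'_j by auto
  define T where "T x = x + (a x - x $ i) *\<^sub>R axis i 1 + (b x - x $ j) *\<^sub>R axis j 1" for x
  have T_i: "T x $ i = a x" and T_j: "T x $ j = b x" for x
    using ij by (simp_all add: T_def axis_def)
  have "linear T"
    unfolding T_def linear_iff using a b
    by (simp add: linear_add linear_scale algebra_simps scaleR_add_left)
  moreover have "inj T"
    unfolding linear_inj_iff_eq_0[OF \<open>linear T\<close>]
  proof (intro allI impI)
    fix x assume T0: "T x = 0"
    then have ab: "a x = 0" "b x = 0" using T_i[of x] T_j[of x] by simp_all
    then have x: "x = x $ i *\<^sub>R axis i 1 + x $ j *\<^sub>R axis j 1"
      using T0 by (simp add: T_def algebra_simps)
    have "a' x = x $ i * a' (axis i 1) + x $ j * a' (axis j 1)"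
      by (subst x) (simp add: linear_add[OF a'] linear_scale[OF a'])
    moreover have "a' x = 0" using ab by (simp add: a'_def)
    ultimately have xi: "x $ i = 0" using i a'_j by simp
    have "b x = x $ i * b (axis i 1) + x $ j * b (axis j 1)"
      by (subst x) (simp add: linear_add[OF b] linear_scale[OF b])
    then have "x $ j = 0" using ab xi j by simp
    with xi x show "x = 0" by simp
  qed
  ultimately show ?thesis
    using that[OF _ _ ij T_i T_j] by blast
qed

locale hyperplane_quadric =
  fixes \<beta> :: "real^'n \<Rightarrow> real^'n \<Rightarrow> real" and \<eta> :: "real^'n \<Rightarrow> real"
    and Z :: "real^'n" and c :: real
  assumes bilinear_\<beta>: "bilinear \<beta>" and \<beta>_sym: "\<And>x y. \<beta> x y = \<beta> y x"
    and \<beta>_Z: "\<And>x. \<beta> Z x = 0" and linear_\<eta>: "linear \<eta>" and \<eta>_Z: "\<eta> Z = 1"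
    and c_nonzero: "c \<noteq> 0"
begin

lemma \<beta>_simps:
  "\<beta> (x + y) z = \<beta> x z + \<beta> y z" "\<beta> (x - y) z = \<beta> x z - \<beta> y z"
  "\<beta> (a *\<^sub>R x) z = a * \<beta> x z" "\<beta> (- x) z = - \<beta> x z" "\<beta> 0 z = 0"
  "\<beta> z (x + y) = \<beta> z x + \<beta> z y" "\<beta> z (x - y) = \<beta> z x - \<beta> z y"
  "\<beta> z (a *\<^sub>R x) = a * \<beta> z x" "\<beta> z (- x) = - \<beta> z x" "\<beta> z 0 = 0"
  "\<beta> Z x = 0" "\<beta> x Z = 0"
  using bilinear_\<beta> \<beta>_Z[of x] \<beta>_sym[of x Z]
  by (simp_all add: bilinear_ladd bilinear_lsub bilinear_lmul bilinear_lneg bilinear_lzero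
      bilinear_radd bilinear_rsub bilinear_rmul bilinear_rneg bilinear_rzero)

lemma \<eta>_simps:
  "\<eta> (x + y) = \<eta> x + \<eta> y" "\<eta> (x - y) = \<eta> x - \<eta> y" "\<eta> (a *\<^sub>R x) = a * \<eta> x"
  "\<eta> (- x) = - \<eta> x" "\<eta> 0 = 0" "\<eta> Z = 1"
  using linear_\<eta> \<eta>_Z by (simp_all add: linear_add linear_diff linear_scale linear_neg linear_0)

lemmas quadric_simps = \<beta>_simps \<eta>_simps

definition quadric :: "(real^'n) set" where
  "quadric = {x. \<eta> x = 0 \<and> \<beta> x x = c}"

text \<open>
  The chart at a point p of the quadric is the stereographic projection from -p onto the
  hyperplane \<open>\<beta> p x = 0\<close>, completed by the rescaled equation level in direction p
  and by the coordinate \<open>\<eta>\<close> in direction Z; its inverse chart_inv is again rational.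
\<close>

definition proj :: "real^'n \<Rightarrow> real^'n" where
  "proj x = x - \<eta> x *\<^sub>R Z"

definition den :: "real^'n \<Rightarrow> real^'n \<Rightarrow> real" where
  "den p x = \<beta> p x + c"

definition qden :: "real^'n \<Rightarrow> real^'n \<Rightarrow> real" where
  "qden p x = \<beta> (x + p) (x + p)"

definition level :: "real^'n \<Rightarrow> real^'n \<Rightarrow> real" where
  "level p x = den p x * (\<beta> x x - c) / (c * qden p x)"

definition chart :: "real^'n \<Rightarrow> real^'n \<Rightarrow> real^'n" where
  "chart p x = (c / den p x) *\<^sub>R (proj x + p) - p + level p x *\<^sub>R p + \<eta> x *\<^sub>R Z"

definition pcoord :: "real^'n \<Rightarrow> real^'n \<Rightarrow> real" where
  "pcoord p y = \<beta> p y / c"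

definition wpart :: "real^'n \<Rightarrow> real^'n \<Rightarrow> real^'n" where
  "wpart p y = proj y - pcoord p y *\<^sub>R p"

definition qinv :: "real^'n \<Rightarrow> real^'n \<Rightarrow> real" where
  "qinv p y = \<beta> (wpart p y + p) (wpart p y + p)"

definition scale :: "real^'n \<Rightarrow> real^'n \<Rightarrow> real" where
  "scale p y = pcoord p y + 2 * c / qinv p y"

definition chart_inv :: "real^'n \<Rightarrow> real^'n \<Rightarrow> real^'n" where
  "chart_inv p y = scale p y *\<^sub>R (wpart p y + p) - p + \<eta> y *\<^sub>R Z"

definition chart_dom :: "real^'n \<Rightarrow> (real^'n) set" where
  "chart_dom p = {x. den p x \<noteq> 0 \<and> qden p x \<noteq> 0}"

definition chart_codom :: "real^'n \<Rightarrow> (real^'n) set" where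
  "chart_codom p = {y. qinv p y \<noteq> 0 \<and> pcoord p y * qinv p y + 2 * c \<noteq> 0}"

lemma \<eta>_proj: "\<eta> (proj x) = 0"
  by (simp add: proj_def quadric_simps)

lemma \<beta>_proj: "\<beta> (proj x) y = \<beta> x y" "\<beta> y (proj x) = \<beta> y x"
  by (simp_all add: proj_def quadric_simps)

lemma \<beta>_scaleR_Z_square: "\<beta> (a *\<^sub>R v + b *\<^sub>R Z) (a *\<^sub>R v + b *\<^sub>R Z) = a\<^sup>2 * \<beta> v v"
  by (simp add: quadric_simps power2_eq_square)

context
  fixes p assumes p: "p \<in> quadric"
begin

lemma \<eta>_p: "\<eta> p = 0" and \<beta>_p: "\<beta> p p = c"
  using p by (simp_all add: quadric_def)

lemma qden_eq: "qden p x = \<beta> x x + 2 * den p x - c"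
  using \<beta>_p by (simp add: qden_def den_def quadric_simps \<beta>_sym[of x p])

lemma level_eq: "qden p x \<noteq> 0 \<Longrightarrow> level p x = den p x / c - 2 * (den p x)\<^sup>2 / (c * qden p x)"
proof -
  assume Q: "qden p x \<noteq> 0"
  have e: "\<beta> x x - c = qden p x - 2 * den p x" by (simp add: qden_eq)
  show ?thesis
    using Q c_nonzero unfolding level_def e by (simp add: field_simps power2_eq_square)
qed

lemma center_in_chart_dom: "p \<in> chart_dom p"
proof -
  have "qden p p = 4 * c" using \<beta>_p by (simp add: qden_eq den_def)
  then show ?thesis using c_nonzero \<beta>_p by (simp add: chart_dom_def den_def)
qed

lemma quadric_iff_chart_coords:
  "x \<in> chart_dom p \<Longrightarrow> x \<in> quadric \<longleftrightarrow> \<eta> x = 0 \<and> level p x = 0"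
  using c_nonzero by (auto simp: chart_dom_def quadric_def level_def)

lemma \<eta>_chart: "\<eta> (chart p x) = \<eta> x"
  using \<eta>_p by (simp add: chart_def quadric_simps \<eta>_proj)

lemma pcoord_chart: "x \<in> chart_dom p \<Longrightarrow> pcoord p (chart p x) = level p x"
proof -
  assume "x \<in> chart_dom p"
  then have "den p x \<noteq> 0" by (simp add: chart_dom_def)
  moreover have "\<beta> p (chart p x) = (c / den p x) * den p x - c + level p x * c"
    using \<beta>_p by (simp add: chart_def quadric_simps \<beta>_proj den_def)
  ultimately show ?thesis using c_nonzero by (simp add: pcoord_def)
qed

lemma wpart_chart: "x \<in> chart_dom p \<Longrightarrow> wpart p (chart p x) = (c / den p x) *\<^sub>R (proj x + p) - p"
proof -
  assume x: "x \<in> chart_dom p"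
  have "proj (chart p x) = chart p x - \<eta> x *\<^sub>R Z" by (simp add: proj_def \<eta>_chart)
  then show ?thesis using pcoord_chart[OF x] by (simp add: wpart_def chart_def)
qed

lemma qinv_chart: "x \<in> chart_dom p \<Longrightarrow> qinv p (chart p x) = (c / den p x)\<^sup>2 * qden p x"
proof -
  assume x: "x \<in> chart_dom p"
  have "qinv p (chart p x) = \<beta> ((c / den p x) *\<^sub>R (proj x + p)) ((c / den p x) *\<^sub>R (proj x + p))"
    by (simp add: qinv_def wpart_chart[OF x])
  also have "\<dots> = (c / den p x)\<^sup>2 * \<beta> (proj x + p) (proj x + p)"
    by (simp only: \<beta>_simps(3,8) power2_eq_square mult.assoc)
  also have "\<beta> (proj x + p) (proj x + p) = qden p x"
    by (simp add: qden_def quadric_simps \<beta>_proj)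
  finally show ?thesis .
qed

lemma scale_chart: "x \<in> chart_dom p \<Longrightarrow> scale p (chart p x) = den p x / c"
  using c_nonzero
  by (auto simp: chart_dom_def scale_def pcoord_chart qinv_chart level_eq field_simps power2_eq_square)

lemma chart_inv_chart: "x \<in> chart_dom p \<Longrightarrow> chart_inv p (chart p x) = x"
proof -
  assume x: "x \<in> chart_dom p"
  then have "den p x \<noteq> 0" by (simp add: chart_dom_def)
  then have "chart_inv p (chart p x) = proj x + \<eta> x *\<^sub>R Z"
    using c_nonzero by (simp add: chart_inv_def scale_chart[OF x] wpart_chart[OF x] \<eta>_chart)
  then show ?thesis by (simp add: proj_def)
qed

lemma chart_in_codom: "x \<in> chart_dom p \<Longrightarrow> chart p x \<in> chart_codom p"
proof -
  assume x: "x \<in> chart_dom p"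
  then have "den p x \<noteq> 0" "qden p x \<noteq> 0" by (auto simp: chart_dom_def)
  then have q: "qinv p (chart p x) \<noteq> 0" using c_nonzero by (simp add: qinv_chart[OF x])
  then have "pcoord p (chart p x) * qinv p (chart p x) + 2 * c = qinv p (chart p x) * scale p (chart p x)"
    by (simp add: scale_def field_simps)
  also have "\<dots> \<noteq> 0" using q \<open>den p x \<noteq> 0\<close> c_nonzero by (simp add: scale_chart[OF x])
  finally show ?thesis using q by (simp add: chart_codom_def)
qed

lemma \<eta>_wpart: "\<eta> (wpart p y) = 0"
  using \<eta>_p by (simp add: wpart_def quadric_simps \<eta>_proj)

lemma \<beta>_p_wpart: "\<beta> p (wpart p y) = 0"
  using \<beta>_p c_nonzero by (simp add: wpart_def quadric_simps \<beta>_proj pcoord_def)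

lemma scale_nonzero: "y \<in> chart_codom p \<Longrightarrow> scale p y \<noteq> 0"
proof -
  assume "y \<in> chart_codom p"
  then have "qinv p y \<noteq> 0" "pcoord p y * qinv p y + 2 * c \<noteq> 0" by (auto simp: chart_codom_def)
  moreover have "qinv p y \<noteq> 0 \<Longrightarrow> pcoord p y * qinv p y + 2 * c = qinv p y * scale p y"
    by (simp add: scale_def field_simps)
  ultimately show ?thesis by auto
qed

lemma \<eta>_chart_inv: "\<eta> (chart_inv p y) = \<eta> y"
  using \<eta>_p by (simp add: chart_inv_def quadric_simps \<eta>_wpart)

lemma den_chart_inv: "den p (chart_inv p y) = scale p y * c"
  using \<beta>_p by (simp add: den_def chart_inv_def quadric_simps \<beta>_p_wpart)

lemma qden_chart_inv: "qden p (chart_inv p y) = (scale p y)\<^sup>2 * qinv p y"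
proof -
  have "chart_inv p y + p = scale p y *\<^sub>R (wpart p y + p) + \<eta> y *\<^sub>R Z"
    by (simp add: chart_inv_def)
  then show ?thesis by (simp add: qden_def qinv_def \<beta>_scaleR_Z_square)
qed

lemma chart_inv_in_dom: "y \<in> chart_codom p \<Longrightarrow> chart_inv p y \<in> chart_dom p"
  using scale_nonzero[of y] c_nonzero
  by (auto simp: chart_dom_def chart_codom_def den_chart_inv qden_chart_inv)

lemma chart_chart_inv: "y \<in> chart_codom p \<Longrightarrow> chart p (chart_inv p y) = y"
proof -
  assume y: "y \<in> chart_codom p"
  have s: "scale p y \<noteq> 0" by (rule scale_nonzero[OF y])
  have q: "qinv p y \<noteq> 0" using y by (simp add: chart_codom_def)
  have proj_inv: "proj (chart_inv p y) = scale p y *\<^sub>R (wpart p y + p) - p"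
    by (simp add: proj_def \<eta>_chart_inv) (simp add: chart_inv_def)
  have "level p (chart_inv p y) = scale p y - 2 * c / qinv p y"
    using s q c_nonzero
    by (simp add: level_eq den_chart_inv qden_chart_inv field_simps power2_eq_square)
  then have level_inv: "level p (chart_inv p y) = pcoord p y"
    by (simp add: scale_def)
  have "chart p (chart_inv p y) = wpart p y + pcoord p y *\<^sub>R p + \<eta> y *\<^sub>R Z"
    using s c_nonzero
    by (simp add: chart_def proj_inv den_chart_inv level_inv \<eta>_chart_inv)
  also have "\<dots> = y" by (simp add: wpart_def proj_def)
  finally show ?thesis .
qed

lemma linear_\<beta>_left: "linear (\<beta> v)"
  using bilinear_\<beta> by (simp add: bilinear_def)

lemma linear_pcoord: "linear (pcoord p)"
  unfolding pcoord_def[abs_def] linear_iff by (simp add: \<beta>_simps add_divide_distrib)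

lemma continuous_on_\<beta>:
  "continuous_on S u \<Longrightarrow> continuous_on S w \<Longrightarrow> continuous_on S (\<lambda>x. \<beta> (u x) (w x))"
  using bounded_bilinear.continuous_on[OF bilinear_conv_bounded_bilinear[THEN iffD1, OF bilinear_\<beta>]] .

lemma continuous_on_linear: "linear (f :: real^'m \<Rightarrow> 'b::real_normed_vector) \<Longrightarrow> continuous_on S f"
  by (simp add: linear_continuous_on linear_conv_bounded_linear)

lemma open_chart_dom: "open (chart_dom p)"
proof -
  have "continuous_on UNIV (den p)"
    unfolding den_def[abs_def] by (intro continuous_intros continuous_on_linear linear_\<beta>_left)
  moreover have "continuous_on UNIV (qden p)"
    unfolding qden_def[abs_def] by (intro continuous_on_\<beta> continuous_intros)
  ultimately show ?thesis
    unfolding chart_dom_def by (intro open_Collect_conj open_Collect_neq continuous_intros)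
qed

lemma open_chart_codom_preimage:
  fixes G :: "real^'n \<Rightarrow> real^'n"
  assumes G: "linear G"
  shows "open {y. G y \<in> chart_codom p}"
proof -
  have G_cont: "continuous_on UNIV (\<lambda>y. f (G y))" if "linear f" for f :: "real^'n \<Rightarrow> real"
    using continuous_on_linear[OF linear_compose[OF G that]] by (simp add: o_def)
  have "wpart p (G y) + p = G y - \<eta> (G y) *\<^sub>R Z - pcoord p (G y) *\<^sub>R p + p" for y
    by (simp add: wpart_def proj_def)
  then have "continuous_on UNIV (\<lambda>y. wpart p (G y) + p)"
    using G_cont[OF linear_\<eta>] G_cont[OF linear_pcoord] continuous_on_linear[OF G]
    by (simp only:) (intro continuous_intros; simp)
  then have "continuous_on UNIV (\<lambda>y. qinv p (G y))"
    unfolding qinv_def by (intro continuous_on_\<beta>)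
  moreover have "{y. G y \<in> chart_codom p} =
      {y. qinv p (G y) \<noteq> 0 \<and> pcoord p (G y) * qinv p (G y) + 2 * c \<noteq> 0}"
    by (simp add: chart_codom_def)
  ultimately show ?thesis
    using G_cont[OF linear_pcoord]
    by (simp only:) (intro open_Collect_conj open_Collect_neq continuous_intros)
qed

lemma real_analytic_at_den: "real_analytic_at (den p) q"
  using real_analytic_at_add[OF real_analytic_at_linear[OF linear_\<beta>_left] real_analytic_at_const]
  by (simp add: den_def[abs_def])

lemma real_analytic_at_\<beta>_square:
  assumes "\<And>i. real_analytic_at (\<lambda>x. u x $ i) q"
  shows "real_analytic_at (\<lambda>x. \<beta> (u x) (u x)) q"
  by (rule real_analytic_at_bilinear_comp[OF bilinear_\<beta> assms assms])

lemma real_analytic_at_level: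
  assumes "qden p q \<noteq> 0"
  shows "real_analytic_at (level p) q"
proof -
  have sq: "real_analytic_at (\<lambda>x. \<beta> (x + v) (x + v)) q" for v
    using real_analytic_at_add[OF real_analytic_at_coord real_analytic_at_const]
    by (intro real_analytic_at_\<beta>_square) simp
  have "real_analytic_at (\<lambda>x. den p x * (\<beta> x x - c) / (c * qden p x)) q"
    using sq[of 0] sq[of p] assms c_nonzero
    by (intro real_analytic_at_divide real_analytic_at_mult real_analytic_at_diff
        real_analytic_at_den real_analytic_at_const) (auto simp: qden_def[abs_def])
  then show ?thesis by (simp add: level_def[abs_def])
qed

lemma real_analytic_at_chart:
  assumes q: "q \<in> chart_dom p"
  shows "real_analytic_at (\<lambda>x. chart p x $ k) q"
proof -
  have "chart p x $ k = (c / den p x) * (x $ k - \<eta> x * Z $ k + p $ k) - p $ k + level p x * p $ k + \<eta> x * Z $ k" for x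
    by (simp add: chart_def proj_def)
  moreover have "real_analytic_at (\<lambda>x. (c / den p x) * (x $ k - \<eta> x * Z $ k + p $ k) - p $ k + level p x * p $ k + \<eta> x * Z $ k) q"
    using q real_analytic_at_linear[OF linear_\<eta>] real_analytic_at_level[of q]
    by (intro real_analytic_at_add real_analytic_at_diff real_analytic_at_mult real_analytic_at_divide
        real_analytic_at_const real_analytic_at_coord real_analytic_at_den) (auto simp: chart_dom_def)
  ultimately show ?thesis by simp
qed

lemma real_analytic_at_chart_inv:
  fixes G :: "real^'n \<Rightarrow> real^'n"
  assumes G: "linear G" and q: "G q \<in> chart_codom p"
  shows "real_analytic_at (\<lambda>y. chart_inv p (G y) $ k) q"
proof -
  have lin: "real_analytic_at (\<lambda>y. f (G y)) q" if "linear f" for f :: "real^'n \<Rightarrow> real"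
    using real_analytic_at_linear[OF linear_compose[OF G that]] by (simp add: o_def)
  have coord: "real_analytic_at (\<lambda>y. G y $ i) q" for i
    by (rule lin) (simp add: linear_iff linear_add[OF G] linear_scale[OF G])
  have w: "real_analytic_at (\<lambda>y. (wpart p (G y) + p) $ i) q" for i
  proof -
    have "real_analytic_at (\<lambda>y. G y $ i - \<eta> (G y) * Z $ i - pcoord p (G y) * p $ i + p $ i) q"
      using coord lin[OF linear_\<eta>] lin[OF linear_pcoord]
      by (intro real_analytic_at_add real_analytic_at_diff real_analytic_at_mult real_analytic_at_const)
    then show ?thesis by (simp add: wpart_def proj_def)
  qed
  have "real_analytic_at (\<lambda>y. scale p (G y)) q"
    using real_analytic_at_\<beta>_square[OF w] lin[OF linear_pcoord] q c_nonzero
    unfolding scale_def qinv_def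
    by (intro real_analytic_at_add real_analytic_at_divide real_analytic_at_const)
       (auto simp: chart_codom_def qinv_def)
  moreover have "chart_inv p (G y) $ k =
      scale p (G y) * (wpart p (G y) + p) $ k - p $ k + \<eta> (G y) * Z $ k" for y
    by (simp add: chart_inv_def)
  ultimately show ?thesis
    using w lin[OF linear_\<eta>]
    by (simp only:) (intro real_analytic_at_add real_analytic_at_diff real_analytic_at_mult real_analytic_at_const)
qed

lemma quadric_slice_chart:
  "\<exists>U V (\<phi> :: real^'n \<Rightarrow> real^'n) \<psi> (K :: 'n set).
     open U \<and> p \<in> U \<and> open V \<and> \<phi> ` U = V \<and> \<psi> ` V = U \<and>
     (\<forall>x\<in>U. \<psi> (\<phi> x) = x) \<and> (\<forall>y\<in>V. \<phi> (\<psi> y) = y) \<and>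
     real_analytic_on \<phi> U \<and> real_analytic_on \<psi> V \<and>
     \<phi> ` (U \<inter> quadric) = V \<inter> {y. \<forall>i. i \<notin> K \<longrightarrow> y $ i = 0}"
proof -
  have "pcoord p p = 1" "\<eta> p = 0" "\<eta> Z = 1"
    using \<beta>_p \<eta>_p c_nonzero by (simp_all add: pcoord_def quadric_simps)
  then obtain T :: "real^'n \<Rightarrow> real^'n" and i j where T: "linear T" "inj T" and "i \<noteq> j"
    and T_i: "\<And>x. T x $ i = pcoord p x" and T_j: "\<And>x. T x $ j = \<eta> x"
    using linear_coordinate_pair[OF linear_pcoord linear_\<eta>] by metis
  define G where "G = inv T"
  have "surj T" using T by (simp add: linear_inj_imp_surj)
  then have G: "linear G" "\<And>x. G (T x) = x" "\<And>y. T (G y) = y"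
    using T by (simp_all add: G_def inj_linear_imp_inv_linear surj_f_inv_f)
  define U V where "U = chart_dom p" and "V = {y. G y \<in> chart_codom p}"
  define \<phi> \<psi> where "\<phi> x = T (chart p x)" and "\<psi> y = chart_inv p (G y)" for x y
  have "\<phi> ` U = V"
    using G(2,3) unfolding U_def V_def \<phi>_def
    by (auto intro!: image_eqI[where x="chart_inv p (G _)"] chart_inv_in_dom simp: chart_chart_inv chart_in_codom)
  moreover have "\<psi> ` V = U"
    using G(2,3) unfolding U_def V_def \<psi>_def
    by (auto intro!: image_eqI[where x="T (chart p _)"] chart_in_codom simp: chart_inv_chart chart_inv_in_dom)
  moreover have "\<forall>x\<in>U. \<psi> (\<phi> x) = x" "\<forall>y\<in>V. \<phi> (\<psi> y) = y"
    by (simp_all add: U_def V_def \<phi>_def \<psi>_def G chart_inv_chart chart_chart_inv)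
  moreover have "real_analytic_on \<phi> U" "real_analytic_on \<psi> V"
    unfolding U_def V_def \<phi>_def \<psi>_def
    by (auto intro!: real_analytic_onI real_analytic_at_linear_comp[where l="\<lambda>v. T v $ _"]
        real_analytic_at_chart real_analytic_at_chart_inv G(1)
        simp: linear_iff linear_add[OF T(1)] linear_scale[OF T(1)])
  moreover have "\<phi> ` (U \<inter> quadric) = V \<inter> {y. \<forall>k. k \<notin> - {i, j} \<longrightarrow> y $ k = 0}"
  proof -
    have "x \<in> quadric \<longleftrightarrow> \<phi> x $ i = 0 \<and> \<phi> x $ j = 0" if "x \<in> U" for x
      using that quadric_iff_chart_coords by (auto simp: U_def \<phi>_def T_i T_j pcoord_chart \<eta>_chart)
    with \<open>\<phi> ` U = V\<close> show ?thesis by auto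
  qed
  ultimately show ?thesis
    using open_chart_dom open_chart_codom_preimage[OF G(1)] center_in_chart_dom
    unfolding U_def V_def by blast
qed

end

lemma analytic_submanifold_quadric: "analytic_submanifold quadric"
  unfolding analytic_submanifold_def using quadric_slice_chart by blast

end

section \<open>Conjugate points in two-step nilpotent groups with one-dimensional center\<close>

lemma has_vector_derivative_eq_on_interval:
  fixes F G :: "real \<Rightarrow> 'a::real_normed_vector"
  assumes I: "is_interval I" and "a \<in> I"
    and F: "\<And>t. t \<in> I \<Longrightarrow> (F has_vector_derivative f t) (at t)"
    and G: "\<And>t. t \<in> I \<Longrightarrow> (G has_vector_derivative f t) (at t)"
    and "F a = G a" and "t \<in> I"
  shows "F t = G t"
proof -
  have "((\<lambda>s. F s - G s) has_vector_derivative 0) (at s within I)" if "s \<in> I" for s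
    using has_vector_derivative_diff[OF F[OF that] G[OF that]]
    by (simp add: has_vector_derivative_at_within)
  then obtain c where c: "\<And>s. s \<in> I \<Longrightarrow> F s - G s = c"
    using has_vector_derivative_zero_constant[OF is_interval_convex[OF I]] by blast
  then have "c = 0" using \<open>a \<in> I\<close> \<open>F a = G a\<close> by force
  then show ?thesis using c \<open>t \<in> I\<close> by force
qed

lemma has_vector_derivative_zero_on_interval:
  fixes F :: "real \<Rightarrow> 'a::real_normed_vector"
  assumes "is_interval I" "a \<in> I" "\<And>t. t \<in> I \<Longrightarrow> (F has_vector_derivative 0) (at t)" "t \<in> I"
  shows "F t = F a"
  using has_vector_derivative_eq_on_interval[OF assms(1,2) assms(3), of "\<lambda>_. F a" t] assms(4)
  by (simp add: has_vector_derivative_const)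

locale two_step_nilpotent_metric =
  fixes br :: "real^'n \<Rightarrow> real^'n \<Rightarrow> real^'n" and B :: "real^'n \<Rightarrow> real^'n \<Rightarrow> real"
  assumes br_bilin: "bilinear br"
    and br_alt: "\<And>x. br x x = 0"
    and two_step: "\<And>x y z. br (br x y) z = 0"
    and B_bilin: "bilinear B"
    and B_sym: "\<And>x y. B x y = B y x"
    and B_nondeg: "\<And>x. (\<forall>y. B x y = 0) \<Longrightarrow> x = 0"
    and dim_center: "dim {z. \<forall>x. br z x = 0} = 1"
    and B_center_nondeg: "\<And>z. z \<in> {z. \<forall>x. br z x = 0} \<Longrightarrow>
                             (\<forall>w\<in>{z. \<forall>x. br z x = 0}. B z w = 0) \<Longrightarrow> z = 0"
begin

lemma br_simps:
  "br (x + y) z = br x z + br y z" "br (x - y) z = br x z - br y z"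
  "br (a *\<^sub>R x) z = a *\<^sub>R br x z" "br (- x) z = - br x z" "br 0 z = 0"
  "br z (x + y) = br z x + br z y" "br z (x - y) = br z x - br z y"
  "br z (a *\<^sub>R x) = a *\<^sub>R br z x" "br z (- x) = - br z x" "br z 0 = 0"
  using br_bilin
  by (simp_all add: bilinear_ladd bilinear_lsub bilinear_lmul bilinear_lneg bilinear_lzero
      bilinear_radd bilinear_rsub bilinear_rmul bilinear_rneg bilinear_rzero)

lemma B_simps:
  "B (x + y) z = B x z + B y z" "B (x - y) z = B x z - B y z"
  "B (a *\<^sub>R x) z = a * B x z" "B (- x) z = - B x z" "B 0 z = 0"
  "B z (x + y) = B z x + B z y" "B z (x - y) = B z x - B z y"
  "B z (a *\<^sub>R x) = a * B z x" "B z (- x) = - B z x" "B z 0 = 0"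
  using B_bilin
  by (simp_all add: bilinear_ladd bilinear_lsub bilinear_lmul bilinear_lneg bilinear_lzero
      bilinear_radd bilinear_rsub bilinear_rmul bilinear_rneg bilinear_rzero)

lemma linear_B_right: "linear (B x)"
  using B_bilin by (simp add: bilinear_def)

lemma br_antisym: "br y x = - br x y"
proof -
  have "br (x + y) (x + y) = br x x + br y x + (br x y + br y y)"
    by (simp only: br_simps)
  then show ?thesis by (simp add: br_alt add_eq_0_iff add.commute)
qed

lemma B_eqI: "(\<And>w. B a w = B b w) \<Longrightarrow> a = b"
  using B_nondeg[of "a - b"] by (simp add: B_simps)

lemma B_represents:
  fixes \<phi> :: "real^'n \<Rightarrow> real"
  assumes "linear \<phi>"
  shows "\<exists>w. \<forall>y. B w y = \<phi> y"
proof -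
  define M where "M x = (\<chi> j. B x (axis j 1))" for x :: "real^'n"
  have M: "linear M"
    unfolding M_def linear_iff by (simp add: vec_eq_iff B_simps)
  have B_eq: "B x y = (\<Sum>j\<in>UNIV. y $ j * M x $ j)" for x y
    using linear_eq_sum_coords[OF linear_B_right, of x y] by (simp add: M_def mult.commute)
  have "inj M"
    unfolding linear_inj_iff_eq_0[OF M] using B_nondeg by (auto simp: B_eq)
  then obtain w where "M w = (\<chi> j. \<phi> (axis j 1))"
    using linear_inj_imp_surj[OF M] by (metis surjD)
  then have "B w y = \<phi> y" for y
    using linear_eq_sum_coords[OF assms, of y] by (simp add: B_eq)
  then show ?thesis by blast
qed

definition koszul :: "real^'n \<Rightarrow> real^'n \<Rightarrow> real^'n \<Rightarrow> real" where
  "koszul X Y W = (B (br X Y) W - B (br Y W) X + B (br W X) Y) / 2"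

lemma B_lc_nabla: "B (lc_nabla br B X Y) W = koszul X Y W"
proof -
  have "linear (koszul X Y)"
    unfolding linear_iff koszul_def by (simp add: B_simps br_simps field_simps)
  then obtain w where w: "\<forall>y. B w y = koszul X Y y"
    using B_represents by blast
  then have "\<exists>!w. \<forall>y. B w y = koszul X Y y"
    by (auto intro: B_eqI)
  then have "\<forall>y. B (lc_nabla br B X Y) y = koszul X Y y"
    unfolding lc_nabla_def koszul_def[symmetric] by (rule theI')
  then show ?thesis by simp
qed

lemma lc_nabla_eqI: "(\<And>W. B w W = koszul X Y W) \<Longrightarrow> lc_nabla br B X Y = w"
  using B_lc_nabla by (intro B_eqI) simp

definition center :: "(real^'n) set" where
  "center = {z. \<forall>x. br z x = 0}"

lemma center_is_line: "\<exists>Z. Z \<noteq> 0 \<and> center = range (\<lambda>t. t *\<^sub>R Z)"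
proof -
  have "subspace center"
    unfolding subspace_def center_def by (simp add: br_simps)
  obtain Bs where Bs: "Bs \<subseteq> center" "independent Bs" "center \<subseteq> span Bs" "card Bs = dim center"
    using basis_exists by blast
  then have "card Bs = 1" using dim_center by (simp add: center_def)
  then obtain Z where Z: "Bs = {Z}" using card_1_singletonE by blast
  then have "center = span {Z}"
    using Bs \<open>subspace center\<close> span_minimal by blast
  moreover have "Z \<noteq> 0" using Bs(2) Z by (auto simp: dependent_zero)
  ultimately show ?thesis by (auto simp: span_singleton)
qed

definition Z :: "real^'n" where
  "Z = (SOME Z. Z \<noteq> 0 \<and> center = range (\<lambda>t. t *\<^sub>R Z))"

lemma Z_nonzero: "Z \<noteq> 0" and in_center_iff: "z \<in> center \<longleftrightarrow> (\<exists>t. z = t *\<^sub>R Z)"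
  using someI_ex[OF center_is_line] by (auto simp: Z_def[symmetric])

lemma Z_in_center: "Z \<in> center"
  using in_center_iff[of Z] by (metis scaleR_one)

lemma br_Z [simp]: "br Z x = 0" "br x Z = 0"
  using Z_in_center br_antisym[of x Z] by (simp_all add: center_def)

definition \<epsilon> :: real where
  "\<epsilon> = B Z Z"

lemma eps_nonzero: "\<epsilon> \<noteq> 0"
proof
  assume "\<epsilon> = 0"
  then have "\<forall>w\<in>center. B Z w = 0"
    by (auto simp: in_center_iff B_simps \<epsilon>_def)
  then have "Z = 0"
    by (intro B_center_nondeg) (auto simp: center_def)
  with Z_nonzero show False by simp
qed

definition zcoord :: "real^'n \<Rightarrow> real" where
  "zcoord x = B x Z / \<epsilon>"

definition \<omega> :: "real^'n \<Rightarrow> real^'n \<Rightarrow> real" where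
  "\<omega> x y = B (br x y) Z / \<epsilon>"

lemma br_eq_omega: "br x y = \<omega> x y *\<^sub>R Z"
proof -
  obtain t where t: "br x y = t *\<^sub>R Z"
    using in_center_iff[of "br x y"] by (auto simp: center_def two_step)
  then have "\<omega> x y = t" using eps_nonzero by (simp add: \<omega>_def B_simps \<epsilon>_def)
  with t show ?thesis by simp
qed

lemma B_Z: "B Z y = \<epsilon> * zcoord y" "B y Z = \<epsilon> * zcoord y"
  using eps_nonzero by (simp_all add: zcoord_def B_sym[of Z y])

lemma zcoord_simps:
  "zcoord (x + y) = zcoord x + zcoord y" "zcoord (x - y) = zcoord x - zcoord y"
  "zcoord (a *\<^sub>R x) = a * zcoord x" "zcoord (- x) = - zcoord x" "zcoord 0 = 0" "zcoord Z = 1"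
  using eps_nonzero by (simp_all add: zcoord_def B_simps add_divide_distrib diff_divide_distrib \<epsilon>_def)

lemma linear_zcoord: "linear zcoord"
  unfolding linear_iff by (simp add: zcoord_simps)

lemma omega_simps:
  "\<omega> (x + y) z = \<omega> x z + \<omega> y z" "\<omega> (x - y) z = \<omega> x z - \<omega> y z" "\<omega> (a *\<^sub>R x) z = a * \<omega> x z"
  "\<omega> 0 z = 0" "\<omega> (- x) z = - \<omega> x z"
  "\<omega> z (x + y) = \<omega> z x + \<omega> z y" "\<omega> z (x - y) = \<omega> z x - \<omega> z y" "\<omega> z (a *\<^sub>R x) = a * \<omega> z x"
  "\<omega> z 0 = 0" "\<omega> z (- x) = - \<omega> z x"
  "\<omega> Z x = 0" "\<omega> x Z = 0" "\<omega> x x = 0"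
  by (simp_all add: \<omega>_def br_simps br_alt B_simps add_divide_distrib diff_divide_distrib)

lemma omega_antisym: "\<omega> y x = - \<omega> x y"
  by (simp add: \<omega>_def br_antisym[of y x] B_simps)

lemma linear_omega: "linear (\<omega> x)"
  unfolding linear_iff by (simp add: omega_simps)

text \<open>J is the map j(Z) of the paper, characterised by \<open>B (J x) w = B Z (br x w)\<close>.\<close>

definition J :: "real^'n \<Rightarrow> real^'n" where
  "J x = (-2) *\<^sub>R lc_nabla br B x Z"

lemma B_J: "B (J x) w = \<epsilon> * \<omega> x w"
proof -
  have "B (lc_nabla br B x Z) w = - (\<epsilon> * \<omega> x w) / 2"
    unfolding B_lc_nabla
    by (simp add: koszul_def br_eq_omega B_simps B_Z zcoord_simps omega_antisym[of w x] omega_simps)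
  then show ?thesis by (simp add: J_def B_simps)
qed

lemma J_simps: "J (x + y) = J x + J y" "J (a *\<^sub>R x) = a *\<^sub>R J x" "J 0 = 0" "J Z = 0"
  by (rule B_eqI; simp add: B_J B_simps omega_simps algebra_simps)+

lemma zcoord_J: "zcoord (J x) = 0"
  using eps_nonzero B_J[of x Z] by (simp add: zcoord_def omega_simps)

definition Jform :: "real^'n \<Rightarrow> real^'n \<Rightarrow> real" where
  "Jform x y = B (J x) (J y) / \<epsilon>"

lemma Jform_diag: "Jform x x = \<omega> x (J x)"
  using eps_nonzero by (simp add: Jform_def B_J)

lemma hyperplane_quadric_Jform: "hyperplane_quadric Jform zcoord Z c \<longleftrightarrow> c \<noteq> 0"
  unfolding hyperplane_quadric_def bilinear_def Jform_def linear_iff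
  by (simp add: J_simps B_simps B_sym add_divide_distrib linear_zcoord zcoord_simps)

definition vproj :: "real^'n \<Rightarrow> real^'n" where
  "vproj x = x - zcoord x *\<^sub>R Z"

lemma vproj_simps:
  "vproj (x + y) = vproj x + vproj y" "vproj (x - y) = vproj x - vproj y"
  "vproj (a *\<^sub>R x) = a *\<^sub>R vproj x" "vproj 0 = 0" "vproj Z = 0" "vproj (J x) = J x"
  "zcoord (vproj x) = 0" "\<omega> x (vproj y) = \<omega> x y"
  by (simp_all add: vproj_def zcoord_simps zcoord_J omega_simps algebra_simps)

lemma vproj_decomp: "x = vproj x + zcoord x *\<^sub>R Z"
  by (simp add: vproj_def)

lemma bounded_linear_zcoord: "bounded_linear zcoord"
  and bounded_linear_omega: "bounded_linear (\<omega> x)"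
  and bounded_linear_vproj: "bounded_linear vproj"
  using linear_zcoord linear_omega
  by (simp_all add: linear_conv_bounded_linear[symmetric] linear_iff vproj_simps)

lemma lc_nabla_horizontal_left:
  "zcoord X = 0 \<Longrightarrow> lc_nabla br B X y = (\<omega> X y / 2) *\<^sub>R Z - (zcoord y / 2) *\<^sub>R J X"
  by (rule lc_nabla_eqI)
     (simp add: koszul_def br_eq_omega B_simps B_Z B_J omega_antisym[of _ X] algebra_simps)

lemma lc_nabla_horizontal_right:
  "zcoord X = 0 \<Longrightarrow> lc_nabla br B y X = (\<omega> y X / 2) *\<^sub>R Z - (zcoord y / 2) *\<^sub>R J X"
  by (rule lc_nabla_eqI) (simp add: koszul_def br_eq_omega B_simps B_Z B_J algebra_simps)

lemma zcoord_lc_nabla_self: "zcoord (lc_nabla br B x x) = 0"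
  using B_lc_nabla[of x x Z] by (simp add: zcoord_def koszul_def br_alt B_simps)

lemma lc_curv_horizontal:
  assumes X: "zcoord X = 0"
  shows "lc_curv br B y X X = (zcoord y * \<omega> X (J X) / 4) *\<^sub>R Z + (3 * \<omega> y X / 4) *\<^sub>R J X"
proof -
  have XX: "lc_nabla br B X X = 0" and y0: "lc_nabla br B y 0 = 0"
    using X by (simp_all add: lc_nabla_horizontal_left omega_simps lc_nabla_eqI koszul_def br_simps B_simps)
  have yX: "lc_nabla br B X (lc_nabla br B y X) = (- zcoord y * \<omega> X (J X) / 4) *\<^sub>R Z - (\<omega> y X / 4) *\<^sub>R J X"
    using X by (simp add: lc_nabla_horizontal_right lc_nabla_horizontal_left omega_simps zcoord_simps zcoord_J algebra_simps)
  have brX: "lc_nabla br B (br y X) X = - (\<omega> y X / 2) *\<^sub>R J X"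
    using X by (simp add: lc_nabla_horizontal_right br_eq_omega omega_simps zcoord_simps)
  show ?thesis
    unfolding lc_curv_def XX y0 yX brX vec_eq_iff by (simp add: field_simps)
qed

lemma jacobi_operator_horizontal:
  assumes X: "zcoord X = 0"
  shows "lc_nabla br B X (y1 + lc_nabla br B X y) + lc_curv br B y X X
     = (\<omega> X y1 / 2) *\<^sub>R Z - (zcoord y1 / 2 + \<omega> X y) *\<^sub>R J X"
proof -
  have D: "lc_nabla br B X (y1 + lc_nabla br B X y) =
      ((\<omega> X y1 - zcoord y * \<omega> X (J X) / 2) / 2) *\<^sub>R Z - ((zcoord y1 + \<omega> X y / 2) / 2) *\<^sub>R J X"
    using X by (simp add: lc_nabla_horizontal_left omega_simps zcoord_simps zcoord_J algebra_simps)
  show ?thesis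
    unfolding D lc_curv_horizontal[OF X] vec_eq_iff using omega_antisym[of y X] by (simp add: field_simps)
qed

lemma geodesic_velocity_const:
  assumes g: "geodesic_on br B I \<gamma> \<gamma>'" and "0 \<in> I" "\<gamma> 0 = 0" "\<gamma>' 0 = X" "zcoord X = 0"
    and "t \<in> I"
  shows "lt_vel br \<gamma> \<gamma>' t = X"
proof -
  let ?u = "lt_vel br \<gamma> \<gamma>'"
  have I: "is_interval I" using g by (simp add: geodesic_on_def)
  obtain u' where du: "\<And>t. t \<in> I \<Longrightarrow> (?u has_vector_derivative u' t) (at t)"
    and geo: "\<And>t. t \<in> I \<Longrightarrow> u' t + lc_nabla br B (?u t) (?u t) = 0"
    using g by (auto simp: geodesic_on_def)
  have u0: "?u 0 = X" using assms(3,4) by (simp add: lt_vel_def br_simps)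
  have "zcoord (?u s) = zcoord (?u 0)" if "s \<in> I" for s
  proof (rule has_vector_derivative_zero_on_interval[OF I \<open>0 \<in> I\<close> _ that])
    fix t assume t: "t \<in> I"
    have "zcoord (u' t) = 0"
      using arg_cong[OF geo[OF t], of zcoord] by (simp add: zcoord_simps zcoord_lc_nabla_self)
    then show "((\<lambda>s. zcoord (?u s)) has_vector_derivative 0) (at t)"
      using bounded_linear.has_vector_derivative[OF bounded_linear_zcoord du[OF t]] by simp
  qed
  then have horizontal: "zcoord (?u s) = 0" if "s \<in> I" for s
    using that u0 assms(5) by simp
  have "?u t = ?u 0"
  proof (rule has_vector_derivative_zero_on_interval[OF I \<open>0 \<in> I\<close> _ \<open>t \<in> I\<close>])
    fix s assume s: "s \<in> I"
    then have "u' s = 0"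
      using geo[OF s] horizontal[OF s] by (simp add: lc_nabla_horizontal_left omega_simps)
    then show "(?u has_vector_derivative 0) (at s)" using du[OF s] by simp
  qed
  with u0 show ?thesis by simp
qed

lemma geodesic_is_line:
  assumes g: "geodesic_on br B I \<gamma> \<gamma>'" and "0 \<in> I" "\<gamma> 0 = 0" "\<gamma>' 0 = X" "zcoord X = 0"
    and "t \<in> I"
  shows "\<gamma> t = t *\<^sub>R X"
proof -
  have I: "is_interval I" and d\<gamma>: "\<And>t. t \<in> I \<Longrightarrow> (\<gamma> has_vector_derivative \<gamma>' t) (at t)"
    using g by (auto simp: geodesic_on_def)
  have \<gamma>': "\<gamma>' s = X + (\<omega> (\<gamma> s) (\<gamma>' s) / 2) *\<^sub>R Z" if "s \<in> I" for s
    using geodesic_velocity_const[OF assms(1-5) that]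
    by (simp add: lt_vel_def br_eq_omega algebra_simps)
  have v: "vproj (\<gamma> s) = s *\<^sub>R X" if "s \<in> I" for s
  proof (rule has_vector_derivative_eq_on_interval[OF I \<open>0 \<in> I\<close> _ _ _ that])
    fix t assume t: "t \<in> I"
    have "vproj (\<gamma>' t) = X"
      using assms(5) by (subst \<gamma>'[OF t]) (simp add: vproj_simps vproj_def[of X])
    then show "((\<lambda>s. vproj (\<gamma> s)) has_vector_derivative X) (at t)"
      using bounded_linear.has_vector_derivative[OF bounded_linear_vproj d\<gamma>[OF t]] by simp
    show "((\<lambda>s. s *\<^sub>R X) has_vector_derivative X) (at t)"
      by (auto intro!: derivative_eq_intros)
  qed (simp add: assms(3) vproj_simps)
  have \<omega>: "\<omega> (\<gamma> s) (\<gamma>' s) = 0" if "s \<in> I" for s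
  proof -
    have "\<omega> (\<gamma> s) (\<gamma>' s) = \<omega> (s *\<^sub>R X + zcoord (\<gamma> s) *\<^sub>R Z) (X + (\<omega> (\<gamma> s) (\<gamma>' s) / 2) *\<^sub>R Z)"
      using vproj_decomp[of "\<gamma> s"] v[OF that] \<gamma>'[OF that] by simp
    then show ?thesis by (simp add: omega_simps)
  qed
  have "zcoord (\<gamma> t) = zcoord (\<gamma> 0)"
  proof (rule has_vector_derivative_zero_on_interval[OF I \<open>0 \<in> I\<close> _ \<open>t \<in> I\<close>])
    fix s assume s: "s \<in> I"
    have "zcoord (\<gamma>' s) = 0" using assms(5) \<gamma>'[OF s] \<omega>[OF s] by simp
    then show "((\<lambda>s. zcoord (\<gamma> s)) has_vector_derivative 0) (at s)"
      using bounded_linear.has_vector_derivative[OF bounded_linear_zcoord d\<gamma>[OF s]] by simp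
  qed
  then show ?thesis
    using vproj_decomp[of "\<gamma> t"] v[OF \<open>t \<in> I\<close>] assms(3) by (simp add: zcoord_simps)
qed

lemma lt_vel_line: "lt_vel br (\<lambda>t. t *\<^sub>R X) (\<lambda>t. X) = (\<lambda>t. X)"
  by (rule ext) (simp add: lt_vel_def br_simps br_alt)

lemma line_is_geodesic:
  assumes "zcoord X = 0"
  shows "geodesic_on br B UNIV (\<lambda>t. t *\<^sub>R X) (\<lambda>t. X)"
  unfolding geodesic_on_def lt_vel_line
  using assms by (auto intro!: derivative_eq_intros exI[of _ "\<lambda>t. 0"]
      simp: lc_nabla_horizontal_left omega_simps)

lemma jacobi_equation_along_line:
  assumes X: "zcoord X = 0" and I: "open I" and u: "\<And>t. t \<in> I \<Longrightarrow> lt_vel br \<gamma> \<gamma>' t = X"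
    and "jacobi_field br B I \<gamma> \<gamma>' y"
  obtains y1 where "\<And>t. t \<in> I \<Longrightarrow> (y has_vector_derivative y1 t) (at t)"
    and "\<And>t. t \<in> I \<Longrightarrow>
      (y1 has_vector_derivative (- \<omega> X (y1 t)) *\<^sub>R Z + (zcoord (y1 t) + \<omega> X (y t)) *\<^sub>R J X) (at t)"
proof -
  let ?u = "lt_vel br \<gamma> \<gamma>'"
  obtain y1 w1 where dy: "\<And>t. t \<in> I \<Longrightarrow> (y has_vector_derivative y1 t) (at t)"
    and dDy: "\<And>t. t \<in> I \<Longrightarrow> ((\<lambda>s. y1 s + lc_nabla br B (?u s) (y s)) has_vector_derivative w1 t) (at t)"
    and jac: "\<And>t. t \<in> I \<Longrightarrow> w1 t + lc_nabla br B (?u t) (y1 t + lc_nabla br B (?u t) (y t))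
          + lc_curv br B (y t) (?u t) (?u t) = 0"
    using assms(4) unfolding jacobi_field_def by blast
  define N where "N v = (\<omega> X v / 2) *\<^sub>R Z - (zcoord v / 2) *\<^sub>R J X" for v
  have N: "bounded_linear N"
    unfolding linear_conv_bounded_linear[symmetric] linear_iff N_def
    by (simp add: omega_simps zcoord_simps algebra_simps add_divide_distrib scaleR_add_left)
  have "(y1 has_vector_derivative (- \<omega> X (y1 t)) *\<^sub>R Z + (zcoord (y1 t) + \<omega> X (y t)) *\<^sub>R J X) (at t)"
    if t: "t \<in> I" for t
  proof -
    have "((\<lambda>s. y1 s + N (y s)) has_vector_derivative w1 t) (at t)"
      by (rule has_vector_derivative_transform_within_open[OF dDy[OF t] I t])
         (simp add: u N_def lc_nabla_horizontal_left[OF X])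
    from has_vector_derivative_diff[OF this bounded_linear.has_vector_derivative[OF N dy[OF t]]]
    have "(y1 has_vector_derivative w1 t - N (y1 t)) (at t)" by simp
    moreover have "w1 t + ((\<omega> X (y1 t) / 2) *\<^sub>R Z - (zcoord (y1 t) / 2 + \<omega> X (y t)) *\<^sub>R J X) = 0"
      using jac[OF t] u[OF t] jacobi_operator_horizontal[OF X, of "y1 t" "y t"] by (simp add: add.assoc)
    then have "w1 t = - ((\<omega> X (y1 t) / 2) *\<^sub>R Z - (zcoord (y1 t) / 2 + \<omega> X (y t)) *\<^sub>R J X)"
      by (simp only: eq_neg_iff_add_eq_0)
    then have "w1 t - N (y1 t) = (- \<omega> X (y1 t)) *\<^sub>R Z + (zcoord (y1 t) + \<omega> X (y t)) *\<^sub>R J X"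
      by (simp add: N_def vec_eq_iff field_simps)
    ultimately show ?thesis by simp
  qed
  with dy show ?thesis using that by blast
qed

lemma jacobi_first_integral:
  assumes I: "is_interval I" "0 \<in> I"
    and dy: "\<And>t. t \<in> I \<Longrightarrow> (y has_vector_derivative y1 t) (at t)"
    and dy1: "\<And>t. t \<in> I \<Longrightarrow>
      (y1 has_vector_derivative (- \<omega> X (y1 t)) *\<^sub>R Z + (zcoord (y1 t) + \<omega> X (y t)) *\<^sub>R J X) (at t)"
    and "t \<in> I"
  shows "zcoord (y1 t) + \<omega> X (y t) = zcoord (y1 0) + \<omega> X (y 0)"
proof (rule has_vector_derivative_zero_on_interval[OF I _ \<open>t \<in> I\<close>])
  fix s assume s: "s \<in> I"
  from has_vector_derivative_add[OF
      bounded_linear.has_vector_derivative[OF bounded_linear_zcoord dy1[OF s]]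
      bounded_linear.has_vector_derivative[OF bounded_linear_omega[of X] dy[OF s]]]
  show "((\<lambda>s. zcoord (y1 s) + \<omega> X (y s)) has_vector_derivative 0) (at s)"
    by (simp add: zcoord_simps zcoord_J)
qed

lemma jacobi_solution_along_line:
  assumes I: "is_interval I" "0 \<in> I"
    and dy: "\<And>t. t \<in> I \<Longrightarrow> (y has_vector_derivative y1 t) (at t)"
    and dy1: "\<And>t. t \<in> I \<Longrightarrow>
      (y1 has_vector_derivative (- \<omega> X (y1 t)) *\<^sub>R Z + (zcoord (y1 t) + \<omega> X (y t)) *\<^sub>R J X) (at t)"
    and "y 0 = 0"
  obtains c V where "\<And>t. t \<in> I \<Longrightarrow> vproj (y t) = t *\<^sub>R V + (t\<^sup>2 / 2 * c) *\<^sub>R J X"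
    and "\<And>t. t \<in> I \<Longrightarrow> zcoord (y t) = c * t - t\<^sup>2 / 2 * \<omega> X V - t ^ 3 / 6 * c * \<omega> X (J X)"
proof -
  define c where "c = zcoord (y1 0)"
  define V where "V = vproj (y1 0)"
  have const: "zcoord (y1 t) + \<omega> X (y t) = c" if "t \<in> I" for t
    using jacobi_first_integral[OF I dy dy1 that] \<open>y 0 = 0\<close> by (simp add: c_def omega_simps)
  have v1: "vproj (y1 t) = V + (t * c) *\<^sub>R J X" if "t \<in> I" for t
  proof (rule has_vector_derivative_eq_on_interval[OF I _ _ _ that])
    fix s assume s: "s \<in> I"
    show "((\<lambda>s. vproj (y1 s)) has_vector_derivative c *\<^sub>R J X) (at s)"
      using bounded_linear.has_vector_derivative[OF bounded_linear_vproj dy1[OF s]] const[OF s]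
      by (simp add: vproj_simps)
    show "((\<lambda>s. V + (s * c) *\<^sub>R J X) has_vector_derivative c *\<^sub>R J X) (at s)"
      by (auto intro!: derivative_eq_intros)
  qed (simp add: V_def)
  have v: "vproj (y t) = t *\<^sub>R V + (t\<^sup>2 / 2 * c) *\<^sub>R J X" if "t \<in> I" for t
  proof (rule has_vector_derivative_eq_on_interval[OF I _ _ _ that])
    fix s assume s: "s \<in> I"
    show "((\<lambda>s. vproj (y s)) has_vector_derivative V + (s * c) *\<^sub>R J X) (at s)"
      using bounded_linear.has_vector_derivative[OF bounded_linear_vproj dy[OF s]] v1[OF s] by simp
    show "((\<lambda>s. s *\<^sub>R V + (s\<^sup>2 / 2 * c) *\<^sub>R J X) has_vector_derivative V + (s * c) *\<^sub>R J X) (at s)"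
      by (auto intro!: derivative_eq_intros simp: power2_eq_square)
  qed (simp add: \<open>y 0 = 0\<close> vproj_simps)
  have "zcoord (y t) = c * t - t\<^sup>2 / 2 * \<omega> X V - t ^ 3 / 6 * c * \<omega> X (J X)" if "t \<in> I" for t
  proof (rule has_vector_derivative_eq_on_interval[OF I _ _ _ that])
    fix s assume s: "s \<in> I"
    have "\<omega> X (y s) = s * \<omega> X V + s\<^sup>2 / 2 * c * \<omega> X (J X)"
      using v[OF s] vproj_simps(8)[of X "y s", symmetric] by (simp add: omega_simps)
    then have "zcoord (y1 s) = c - s * \<omega> X V - s\<^sup>2 / 2 * c * \<omega> X (J X)"
      using const[OF s] by simp
    then show "((\<lambda>s. zcoord (y s)) has_vector_derivative c - s * \<omega> X V - s\<^sup>2 / 2 * c * \<omega> X (J X)) (at s)"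
      using bounded_linear.has_vector_derivative[OF bounded_linear_zcoord dy[OF s]] by simp
    show "((\<lambda>s. c * s - s\<^sup>2 / 2 * \<omega> X V - s ^ 3 / 6 * c * \<omega> X (J X)) has_vector_derivative
        c - s * \<omega> X V - s\<^sup>2 / 2 * c * \<omega> X (J X)) (at s)"
      by (auto intro!: derivative_eq_intros simp: power2_eq_square power3_eq_cube field_simps)
  qed (simp add: \<open>y 0 = 0\<close> zcoord_simps)
  with v that show ?thesis by blast
qed

lemma conjugate_point_condition:
  assumes X: "zcoord X = 0" and I: "open I" "is_interval I" "0 \<in> I"
    and u: "\<And>t. t \<in> I \<Longrightarrow> lt_vel br \<gamma> \<gamma>' t = X"
    and "jacobi_field br B I \<gamma> \<gamma>' y" "y 0 = 0"
    and t0: "t0 \<in> I" "t0 \<noteq> 0" "y t0 = 0" and nontrivial: "\<exists>t\<in>I. y t \<noteq> 0"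
  shows "t0\<^sup>2 * \<omega> X (J X) = -12"
proof -
  obtain y1 where "\<And>t. t \<in> I \<Longrightarrow> (y has_vector_derivative y1 t) (at t)"
    and "\<And>t. t \<in> I \<Longrightarrow>
      (y1 has_vector_derivative (- \<omega> X (y1 t)) *\<^sub>R Z + (zcoord (y1 t) + \<omega> X (y t)) *\<^sub>R J X) (at t)"
    using jacobi_equation_along_line[OF X I(1) u assms(6)] by blast
  then obtain c V where v: "\<And>t. t \<in> I \<Longrightarrow> vproj (y t) = t *\<^sub>R V + (t\<^sup>2 / 2 * c) *\<^sub>R J X"
    and z: "\<And>t. t \<in> I \<Longrightarrow> zcoord (y t) = c * t - t\<^sup>2 / 2 * \<omega> X V - t ^ 3 / 6 * c * \<omega> X (J X)"
    using jacobi_solution_along_line[OF I(2,3)] \<open>y 0 = 0\<close> by metis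
  have "t0 *\<^sub>R (V + (t0 / 2 * c) *\<^sub>R J X) = 0"
    using v[OF t0(1)] t0(3) by (simp add: vproj_simps scaleR_add_right power2_eq_square mult.assoc)
  then have V: "V = - ((t0 / 2 * c) *\<^sub>R J X)"
    using t0(2) by (simp only: eq_neg_iff_add_eq_0 scaleR_eq_0_iff) simp
  have "c \<noteq> 0"
  proof
    assume "c = 0"
    then have "vproj (y t) = 0 \<and> zcoord (y t) = 0" if "t \<in> I" for t
      using v[OF that] z[OF that] V by (simp add: omega_simps)
    then show False
      using nontrivial vproj_decomp by (metis scale_zero_left add_0)
  qed
  have "c * t0 - t0\<^sup>2 / 2 * (- t0 / 2 * c * \<omega> X (J X)) - t0 ^ 3 / 6 * c * \<omega> X (J X) = 0"
    using z[OF t0(1)] t0(3) V by (simp add: zcoord_simps omega_simps)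
  then have "(c * t0) * (12 + t0\<^sup>2 * \<omega> X (J X)) = 0"
    by (simp add: power2_eq_square power3_eq_cube algebra_simps)
  then show ?thesis using \<open>c \<noteq> 0\<close> t0(2) by simp
qed

lemma conjugate_point_exists:
  assumes X: "zcoord X = 0" "\<omega> X (J X) = -12"
  shows "conjugate_along br B UNIV (\<lambda>t. t *\<^sub>R X) (\<lambda>t. X) 1"
proof -
  have coords: "\<omega> X (a *\<^sub>R J X + b *\<^sub>R Z) = - 12 * a" "zcoord (a *\<^sub>R J X + b *\<^sub>R Z) = b" for a b
    using X by (simp_all add: omega_simps zcoord_simps zcoord_J)
  have nabla: "lc_nabla br B X v = (\<omega> X v / 2) *\<^sub>R Z - (zcoord v / 2) *\<^sub>R J X" for v
    by (rule lc_nabla_horizontal_left[OF X(1)])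
  define y y1 Dy w1 where
    "y t = ((t\<^sup>2 - t) / 2) *\<^sub>R J X + (t - 3 * t\<^sup>2 + 2 * t ^ 3) *\<^sub>R Z" and
    "y1 t = ((2 * t - 1) / 2) *\<^sub>R J X + (1 - 6 * t + 6 * t\<^sup>2) *\<^sub>R Z" and
    "Dy t = ((- 1 + t + 3 * t\<^sup>2 - 2 * t ^ 3) / 2) *\<^sub>R J X + (1 - 3 * t + 3 * t\<^sup>2) *\<^sub>R Z" and
    "w1 t = ((1 + 6 * t - 6 * t\<^sup>2) / 2) *\<^sub>R J X + (6 * t - 3) *\<^sub>R Z" for t :: real
  have "(y has_vector_derivative y1 t) (at t)" "(Dy has_vector_derivative w1 t) (at t)" for t
    unfolding y_def y1_def Dy_def w1_def
    by (rule derivative_eq_intros refl | simp add: vec_eq_iff power2_eq_square field_simps)+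
  moreover have "y1 t + lc_nabla br B X (y t) = Dy t" for t
    unfolding nabla y_def coords y1_def Dy_def
    by (simp add: vec_eq_iff power2_eq_square power3_eq_cube field_simps)
  moreover have "w1 t + lc_nabla br B X (y1 t + lc_nabla br B X (y t)) + lc_curv br B (y t) X X = 0" for t
  proof -
    have "w1 t + lc_nabla br B X (y1 t + lc_nabla br B X (y t)) + lc_curv br B (y t) X X
        = w1 t + ((\<omega> X (y1 t) / 2) *\<^sub>R Z - (zcoord (y1 t) / 2 + \<omega> X (y t)) *\<^sub>R J X)"
      using jacobi_operator_horizontal[OF X(1), of "y1 t" "y t"] by (simp add: add.assoc)
    also have "\<dots> = 0"
      unfolding y1_def y_def coords w1_def by (simp add: vec_eq_iff power2_eq_square field_simps)
    finally show ?thesis .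
  qed
  ultimately have "jacobi_field br B UNIV (\<lambda>t. t *\<^sub>R X) (\<lambda>t. X) y"
    unfolding jacobi_field_def lt_vel_line by (intro exI[of _ y1] exI[of _ w1]) auto
  moreover have "y 0 = 0" "y 1 = 0" by (simp_all add: y_def)
  moreover have "zcoord (y 2) = 6"
    using coords(2)[of 1 6] by (simp add: y_def)
  then have "y 2 \<noteq> 0" by (auto simp: zcoord_simps)
  ultimately show ?thesis
    unfolding conjugate_along_def by (intro conjI exI[of _ y]) auto
qed

lemma horizontal_iff: "v \<in> {v. \<forall>z\<in>center. B v z = 0} \<longleftrightarrow> zcoord v = 0"
  using Z_in_center by (auto simp: in_center_iff zcoord_def B_simps eps_nonzero)

lemma conjugate_locus_eq:
  "{\<gamma> t0 | I \<gamma> \<gamma>' t0. geodesic_on br B I \<gamma> \<gamma>' \<and> 0 \<in> I \<and> \<gamma> 0 = 0 \<and>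
      \<gamma>' 0 \<in> {v. \<forall>z\<in>center. B v z = 0} - {0} \<and> conjugate_along br B I \<gamma> \<gamma>' t0}
   = {x. zcoord x = 0 \<and> Jform x x = -12}"
proof (intro set_eqI iffI)
  fix x assume "x \<in> {\<gamma> t0 | I \<gamma> \<gamma>' t0. geodesic_on br B I \<gamma> \<gamma>' \<and> 0 \<in> I \<and> \<gamma> 0 = 0 \<and>
      \<gamma>' 0 \<in> {v. \<forall>z\<in>center. B v z = 0} - {0} \<and> conjugate_along br B I \<gamma> \<gamma>' t0}"
  then obtain I \<gamma> \<gamma>' t0 where x: "x = \<gamma> t0" and g: "geodesic_on br B I \<gamma> \<gamma>'"
    and "0 \<in> I" "\<gamma> 0 = 0" and X: "zcoord (\<gamma>' 0) = 0" and conj: "conjugate_along br B I \<gamma> \<gamma>' t0"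
    using horizontal_iff by blast
  obtain y where "jacobi_field br B I \<gamma> \<gamma>' y" "y 0 = 0" "t0 \<in> I" "t0 \<noteq> 0" "y t0 = 0" "\<exists>t\<in>I. y t \<noteq> 0"
    using conj by (auto simp: conjugate_along_def)
  moreover have "open I" "is_interval I" using g by (auto simp: geodesic_on_def)
  ultimately have "t0\<^sup>2 * \<omega> (\<gamma>' 0) (J (\<gamma>' 0)) = -12"
    using conjugate_point_condition[OF X] geodesic_velocity_const[OF g \<open>0 \<in> I\<close> \<open>\<gamma> 0 = 0\<close> refl X]
      \<open>0 \<in> I\<close> by blast
  moreover have "x = t0 *\<^sub>R \<gamma>' 0"
    using geodesic_is_line[OF g \<open>0 \<in> I\<close> \<open>\<gamma> 0 = 0\<close> refl X \<open>t0 \<in> I\<close>] x by simp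
  ultimately show "x \<in> {x. zcoord x = 0 \<and> Jform x x = -12}"
    using X by (simp add: zcoord_simps Jform_diag omega_simps J_simps power2_eq_square)
next
  fix x assume "x \<in> {x. zcoord x = 0 \<and> Jform x x = -12}"
  then have x: "zcoord x = 0" "\<omega> x (J x) = -12" by (auto simp: Jform_diag)
  then have "x \<noteq> 0" by (auto simp: omega_simps)
  then show "x \<in> {\<gamma> t0 | I \<gamma> \<gamma>' t0. geodesic_on br B I \<gamma> \<gamma>' \<and> 0 \<in> I \<and> \<gamma> 0 = 0 \<and>
      \<gamma>' 0 \<in> {v. \<forall>z\<in>center. B v z = 0} - {0} \<and> conjugate_along br B I \<gamma> \<gamma>' t0}"
    using line_is_geodesic[OF x(1)] conjugate_point_exists[OF x] horizontal_iff[of x] x(1)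
    by (intro CollectI exI[of _ UNIV] exI[of _ "\<lambda>t. t *\<^sub>R x"] exI[of _ "\<lambda>t. x"] exI[of _ 1]) auto
qed

end

theorem mainTheorem6:
  fixes br :: "real^'n \<Rightarrow> real^'n \<Rightarrow> real^'n"
    and B :: "real^'n \<Rightarrow> real^'n \<Rightarrow> real"
  assumes br_bilin: "bilinear br"
    and br_alt: "\<And>x. br x x = 0"
    and two_step: "\<And>x y z. br (br x y) z = 0"
    and nonabelian: "\<exists>x y. br x y \<noteq> 0"
    and B_bilin: "bilinear B"
    and B_sym: "\<And>x y. B x y = B y x"
    and B_nondeg: "\<And>x. (\<forall>y. B x y = 0) \<Longrightarrow> x = 0"
    and dim_center: "dim {z. \<forall>x. br z x = 0} = 1"
    and B_center_nondeg: "\<And>z. z \<in> {z. \<forall>x. br z x = 0} \<Longrightarrow>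
                             (\<forall>w\<in>{z. \<forall>x. br z x = 0}. B z w = 0) \<Longrightarrow> z = 0"
  shows "let \<zz> = {z. \<forall>x. br z x = 0};
             \<vv> = {v. \<forall>z\<in>\<zz>. B v z = 0};
             CL = {\<gamma> t0 | I \<gamma> \<gamma>' t0. geodesic_on br B I \<gamma> \<gamma>' \<and> 0 \<in> I \<and> \<gamma> 0 = 0 \<and>
                      \<gamma>' 0 \<in> \<vv> - {0} \<and> conjugate_along br B I \<gamma> \<gamma>' t0}
         in CL \<subseteq> id ` \<vv> \<and> analytic_submanifold CL"
proof -
  interpret two_step_nilpotent_metric br B
    by (rule two_step_nilpotent_metric.intro) fact+
  interpret hyperplane_quadric Jform zcoord Z "-12"
    by (simp add: hyperplane_quadric_Jform)
  have "{x. zcoord x = 0 \<and> Jform x x = -12} = quadric"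
    by (simp add: quadric_def)
  then show ?thesis
    unfolding Let_def center_def[symmetric] conjugate_locus_eq
    using analytic_submanifold_quadric horizontal_iff by auto
qed

end
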